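(* Let ${\sf S}_3(n,\ell)$ denote the number of $3$-noncrossing RNA structures on $\{1,\dots,n\}$ with exactly $\ell$ isolated vertices, where $0\le \ell\le n$. Then $$ {\sf S}_3(n,\ell)=\sum_{b=0}^{\lfloor (n-\ell)/2\rfloor}(-1)^b\binom{n-b}{b}\binom{n-2b}{\ell}\left[C_{\frac{n-\ell-2b}{2}}\,C_{\frac{n-\ell-2b}{2}+2}-C_{\frac{n-\ell-2b}{2}+1}^2\right], $$ where $C_m=\frac{1}{m+1}\binom{2m}{m}$ is the $m$-th Catalan number for nonnegative integers $m$, and $C_x:=0$ when $x$ is not an integer.
   Context: A digraph on $\{1,\dots,n\}$ is a set of arcs $(i,j)$ with $1\le i<j\le n$. A $3$-noncrossing digraph is one in which every vertex lies in at most one arc and there are no three arcs $(i_1,j_1),(i_2,j_2),(i_3,j_3)$ with $i_1<i_2<i_3<j_1<j_2<j_3$. A vertex is isolated if it lies in no arc. A $3$-noncrossing RNA structure is a $3$-noncrossing digraph with no arc of the form $(i,i+1)$. *)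

theory Defs
  imports Main
begin

definition digraph_on :: "nat \<Rightarrow> (nat \<times> nat) set \<Rightarrow> bool" where
  "digraph_on n A \<longleftrightarrow> (\<forall>(i,j)\<in>A. 1 \<le> i \<and> i < j \<and> j \<le> n)"

definition in_arc :: "nat \<Rightarrow> nat \<times> nat \<Rightarrow> bool" where
  "in_arc v a \<longleftrightarrow> v = fst a \<or> v = snd a"

definition three_noncrossing :: "nat \<Rightarrow> (nat \<times> nat) set \<Rightarrow> bool" where
  "three_noncrossing n A \<longleftrightarrow> digraph_on n A
     \<and> (\<forall>v. \<forall>a\<in>A. \<forall>b\<in>A. in_arc v a \<and> in_arc v b \<longrightarrow> a = b)
     \<and> \<not> (\<exists>i1 j1 i2 j2 i3 j3. (i1,j1)\<in>A \<and> (i2,j2)\<in>A \<and> (i3,j3)\<in>A \<and>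
            i1 < i2 \<and> i2 < i3 \<and> i3 < j1 \<and> j1 < j2 \<and> j2 < j3)"

definition rna3 :: "nat \<Rightarrow> (nat \<times> nat) set \<Rightarrow> bool" where
  "rna3 n A \<longleftrightarrow> three_noncrossing n A \<and> (\<forall>i. (i, Suc i) \<notin> A)"

definition isolated_vertices :: "nat \<Rightarrow> (nat \<times> nat) set \<Rightarrow> nat set" where
  "isolated_vertices n A = {v \<in> {1..n}. \<not> (\<exists>a\<in>A. in_arc v a)}"

definition S3 :: "nat \<Rightarrow> nat \<Rightarrow> nat" where
  "S3 n l = card {A. rna3 n A \<and> card (isolated_vertices n A) = l}"

definition catalan :: "nat \<Rightarrow> nat" where
  "catalan m = (2*m choose m) div (m + 1)"

definition catalan_half :: "nat \<Rightarrow> int" where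
  "catalan_half k = (if even k then int (catalan (k div 2)) else 0)"

end

theory Submission
  imports Defs
begin

text \<open>Scanning a 3-noncrossing partial matching on \<open>{1..n}\<close> from left to right, put the left end
  of each arc into a two-row tableau and remove it at the right end by reverse row insertion. The
  shapes \<open>a \<ge> b \<ge> 0\<close> form a walk from the empty shape back to itself with steps \<open>\<plusminus>e1\<close>,
  \<open>\<plusminus>e2\<close> and stays, and row insertion inverts the construction exactly because there is no
  3-crossing. Isolated vertices become stays, and an arc \<open>(i, i + 1)\<close> becomes a step \<open>+e1\<close>
  followed by \<open>-e1\<close>. The walks without stays are counted by the reflection principle for the
  Weyl chamber of type \<open>B2\<close>, which yields the Catalan determinant
  \<open>C m * C (m + 2) - C (m + 1)^2\<close> for length \<open>2 m\<close>; the stays contribute \<open>n choose l\<close>, and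
  inclusion-exclusion over the forbidden factors \<open>+e1 -e1\<close> gives the alternating sum.\<close>

section \<open>Counting walks in the Weyl chamber\<close>

fun line_walks :: "nat \<Rightarrow> int \<Rightarrow> int" where
  "line_walks 0 d = (if d = 0 then 1 else 0)"
| "line_walks (Suc K) d = line_walks K (d - 1) + line_walks K (d + 1)"

lemma line_walks_uminus: "line_walks K (- d) = line_walks K d"
proof (induction K arbitrary: d)
  case (Suc K)
  have "- d - 1 = - (d + 1)" "- d + 1 = - (d - 1)" by simp_all
  then show ?case by (simp only: line_walks.simps Suc.IH add.commute)
qed simp

lemma line_walks_eq_0_if_far: "int K < \<bar>d\<bar> \<Longrightarrow> line_walks K d = 0"
  by (induction K arbitrary: d) auto

lemma line_walks_eq_0_if_odd: "odd (int K + d) \<Longrightarrow> line_walks K d = 0"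
  by (induction K arbitrary: d) auto

lemma line_walks_binomial: "line_walks K (int K - 2 * int j) = int (K choose j)"
proof (induction K arbitrary: j)
  case (Suc K)
  show ?case
  proof (cases j)
    case 0
    then show ?thesis using Suc.IH[of 0] line_walks_eq_0_if_far[of K "int K + 2"]
      by (simp add: algebra_simps)
  next
    case (Suc i)
    have "int (Suc K) - 2 * int j - 1 = int K - 2 * int j" "int (Suc K) - 2 * int j + 1 = int K - 2 * int i"
      using Suc by simp_all
    then show ?thesis using Suc.IH[of j] Suc.IH[of i] Suc by (simp only: line_walks.simps) simp
  qed
qed simp

lemma line_walks_even: "line_walks (2 * m) (2 * int k) = int (2 * m choose (m + k))"
  using line_walks_binomial[of "2 * m" "m + k"] line_walks_uminus[of "2 * m" "2 * int k"] by simp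

lemma line_walks_Suc_Suc:
  "line_walks (Suc (Suc K)) d = line_walks K (d - 2) + 2 * line_walks K d + line_walks K (d + 2)"
  by (simp add: add.commute)

lemma binomial_Suc_ratio: "Suc k * (n choose Suc k) = (n - k) * (n choose k)"
  by (metis binomial_absorption binomial_absorb_comp)

lemma catalan_eq_binomial_diff: "catalan m = (2 * m choose m) - (2 * m choose Suc m)"
proof -
  have "Suc m * (2 * m choose Suc m) = m * (2 * m choose m)"
    using binomial_Suc_ratio[of m "2 * m"] by simp
  then have "(m + 1) * ((2 * m choose m) - (2 * m choose Suc m)) = 2 * m choose m"
    by (simp add: diff_mult_distrib2)
  then show ?thesis unfolding catalan_def by (metis div_mult_self1_is_m zero_less_Suc Suc_eq_plus1)
qed

lemma catalan_eq_line_walks: "int (catalan m) = line_walks (2 * m) 0 - line_walks (2 * m) 2"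
proof -
  have "Suc m * (2 * m choose Suc m) \<le> Suc m * (2 * m choose m)"
    using binomial_Suc_ratio[of m "2 * m"] by simp
  then have "2 * m choose Suc m \<le> 2 * m choose m" by (simp only: Suc_mult_le_cancel1)
  then show ?thesis using line_walks_even[of m 0] line_walks_even[of m 1]
    by (simp add: catalan_eq_binomial_diff)
qed

text \<open>Rotating by 45 degrees turns the four unit steps of the plane into independent
  \<open>\<plusminus>1\<close> steps of \<open>x + y\<close> and \<open>x - y\<close>.\<close>
definition plane_walks :: "nat \<Rightarrow> int \<Rightarrow> int \<Rightarrow> int" where
  "plane_walks K x y = line_walks K (x + y) * line_walks K (x - y)"

lemma plane_walks_Suc:
  "plane_walks (Suc K) x y =
     plane_walks K (x + 1) y + plane_walks K (x - 1) y + plane_walks K x (y + 1) + plane_walks K x (y - 1)"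
  unfolding plane_walks_def by (simp add: algebra_simps)

lemma plane_walks_swap: "plane_walks K x y = plane_walks K y x"
  unfolding plane_walks_def using line_walks_uminus[of K "x - y"] by (simp add: algebra_simps)

lemma plane_walks_uminus_right: "plane_walks K x (- y) = plane_walks K x y"
  unfolding plane_walks_def by (simp add: mult.commute)

text \<open>Reflection principle for the chamber \<open>X > Y > 0\<close>: the alternating sum over the eight
  signed permutations \<open>\<sigma>\<close> of the target point \<open>(2, 1)\<close> of the walks from \<open>(X, Y)\<close> to \<open>\<sigma>(2, 1)\<close>.\<close>
definition weyl_sum :: "nat \<Rightarrow> int \<Rightarrow> int \<Rightarrow> int" where
  "weyl_sum K X Y =
     plane_walks K (X - 2) (Y - 1) - plane_walks K (X - 1) (Y - 2)
   - plane_walks K (X + 2) (Y - 1) - plane_walks K (X - 2) (Y + 1)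
   + plane_walks K (X + 2) (Y + 1) + plane_walks K (X + 1) (Y - 2)
   + plane_walks K (X - 1) (Y + 2) - plane_walks K (X + 1) (Y + 2)"

lemma weyl_sum_Suc:
  "weyl_sum (Suc K) X Y = weyl_sum K (X + 1) Y + weyl_sum K (X - 1) Y + weyl_sum K X (Y + 1) + weyl_sum K X (Y - 1)"
  unfolding weyl_sum_def plane_walks_Suc by (simp add: algebra_simps)

lemma weyl_sum_axis: "weyl_sum K X 0 = 0"
  unfolding weyl_sum_def using plane_walks_uminus_right[of K _ 1] plane_walks_uminus_right[of K _ 2] by simp

lemma weyl_sum_diagonal: "weyl_sum K X X = 0"
  unfolding weyl_sum_def
  using plane_walks_swap[of K "X - 2" "X - 1"] plane_walks_swap[of K "X + 2" "X - 1"]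
    plane_walks_swap[of K "X - 2" "X + 1"] plane_walks_swap[of K "X + 2" "X + 1"] by simp

definition moves :: "(nat \<Rightarrow> nat \<Rightarrow> 'a::comm_monoid_add) \<Rightarrow> nat \<Rightarrow> nat \<Rightarrow> 'a" where
  "moves f a b = f (Suc a) b + (if b < a then f a (Suc b) + f (a - 1) b else 0) + (if 0 < b then f a (b - 1) else 0)"

text \<open>\<open>chamber_walks K a b\<close> counts the walks of \<open>K\<close> steps from \<open>(a, b)\<close> to the origin that stay
  in the chamber \<open>a \<ge> b \<ge> 0\<close>.\<close>
primrec chamber_walks :: "nat \<Rightarrow> nat \<Rightarrow> nat \<Rightarrow> nat" where
  "chamber_walks 0 = (\<lambda>a b. if a = 0 \<and> b = 0 then 1 else 0)"
| "chamber_walks (Suc K) = moves (chamber_walks K)"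

lemma chamber_walks_eq_weyl_sum: "b \<le> a \<Longrightarrow> int (chamber_walks K a b) = weyl_sum K (int a + 2) (int b + 1)"
proof (induction K arbitrary: a b)
  case 0
  then show ?case unfolding weyl_sum_def plane_walks_def by auto
next
  case (Suc K)
  have right: "int (chamber_walks K (Suc a) b) = weyl_sum K (int a + 2 + 1) (int b + 1)"
    using Suc by (simp add: algebra_simps)
  have up_left: "int (if b < a then chamber_walks K a (Suc b) + chamber_walks K (a - 1) b else 0)
      = weyl_sum K (int a + 2) (int b + 1 + 1) + weyl_sum K (int a + 2 - 1) (int b + 1)"
  proof (cases "b < a")
    case True
    then show ?thesis using Suc.IH[of "Suc b" a] Suc.IH[of b "a - 1"] by (simp add: algebra_simps of_nat_diff)
  next
    case False
    then have "int b + 1 + 1 = int a + 2" "int a + 2 - 1 = int b + 1" using Suc.prems by simp_all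
    then show ?thesis using False by (simp only: weyl_sum_diagonal) simp
  qed
  have down: "int (if 0 < b then chamber_walks K a (b - 1) else 0) = weyl_sum K (int a + 2) (int b + 1 - 1)"
    using Suc weyl_sum_axis by (cases "0 < b") (simp_all add: algebra_simps of_nat_diff)
  show ?case using right up_left down by (simp only: chamber_walks.simps moves_def weyl_sum_Suc of_nat_add)
qed

definition catalan_hankel :: "nat \<Rightarrow> int" where
  "catalan_hankel K = catalan_half K * catalan_half (K + 4) - (catalan_half (K + 2))^2"

text \<open>Both sides are the same quadratic form in the \<open>line_walks (2 * m) (2 * k)\<close>, \<open>k \<le> 3\<close>.\<close>
lemma weyl_sum_even: "weyl_sum (2 * m) 2 1 = int (catalan m) * int (catalan (m + 2)) - int (catalan (m + 1))^2"
proof -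
  define p where "p k = line_walks (2 * m) (2 * int k)" for k
  have neg: "line_walks (2 * m) (- (2 * int k)) = p k" for k
    unfolding p_def by (rule line_walks_uminus)
  have "2 * (m + 1) = Suc (Suc (2 * m))" "2 * (m + 2) = Suc (Suc (Suc (Suc (2 * m))))" by simp_all
  then have cat: "int (catalan m) = p 0 - p 1" "int (catalan (m + 1)) = p 0 - p 2"
    "int (catalan (m + 2)) = 2 * p 0 + p 1 - 2 * p 2 - p 3"
    using catalan_eq_line_walks[of m] catalan_eq_line_walks[of "m + 1"] catalan_eq_line_walks[of "m + 2"]
      neg[of 1] neg[of 2]
    by (simp_all only: line_walks_Suc_Suc) (simp_all add: p_def)
  have "weyl_sum (2 * m) 2 1 = p 0 * p 0 - p 0 * p 1 - p 2 * p 2 - p 1 * p 1 + p 3 * p 1 + 2 * p 1 * p 2 - p 3 * p 0"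
    unfolding weyl_sum_def plane_walks_def using neg[of 1] by (simp add: p_def)
  then show ?thesis unfolding cat by (simp add: algebra_simps power2_eq_square)
qed

lemma weyl_sum_odd: "weyl_sum (Suc (2 * m)) 2 1 = 0"
  unfolding weyl_sum_def plane_walks_def by (simp add: line_walks_eq_0_if_odd)

lemma chamber_walks_origin: "int (chamber_walks K 0 0) = catalan_hankel K"
proof (cases "even K")
  case True
  then obtain m where "K = 2 * m" by (rule evenE)
  moreover have "(2 * m + 4) div 2 = m + 2" "(2 * m + 2) div 2 = m + 1" by simp_all
  ultimately show ?thesis using chamber_walks_eq_weyl_sum[of 0 0 K] weyl_sum_even[of m]
    unfolding catalan_hankel_def catalan_half_def by simp
next
  case False
  then obtain m where "K = Suc (2 * m)" using oddE by fastforce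
  then show ?thesis using chamber_walks_eq_weyl_sum[of 0 0 K] weyl_sum_odd[of m]
    unfolding catalan_hankel_def catalan_half_def by simp
qed

section \<open>Stays and the exclusion of short arcs\<close>

lemma moves_scale:
  fixes c :: "'a::comm_semiring_0"
  shows "moves (\<lambda>a b. c * f a b) a b = c * moves f a b"
  unfolding moves_def by (simp add: distrib_left)

lemma of_nat_moves: "of_nat (moves f a b) = moves (\<lambda>a b. of_nat (f a b)) a b"
  unfolding moves_def by simp

text \<open>One step of a walk that must still make \<open>l\<close> stays.\<close>
definition transfer :: "(nat \<Rightarrow> nat \<Rightarrow> nat \<Rightarrow> 'a::comm_monoid_add) \<Rightarrow> nat \<Rightarrow> nat \<Rightarrow> nat \<Rightarrow> 'a" where
  "transfer g l a b = (if 0 < l then g (l - 1) a b else 0) + moves (g l) a b"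

lemma of_nat_transfer: "of_nat (transfer g l a b) = transfer (\<lambda>l a b. of_nat (g l a b)) l a b"
  unfolding transfer_def by (simp add: of_nat_moves)

lemma transfer_cong:
  assumes "b \<le> a" and "\<And>l' a' b'. b' \<le> a' \<Longrightarrow> f l' a' b' = g l' a' b'"
  shows "transfer f l a b = transfer g l a b"
  using assms unfolding transfer_def moves_def by auto

text \<open>Walks of length \<open>n\<close> with \<open>l\<close> stays: choose the positions of the stays.\<close>
definition stay_walks :: "nat \<Rightarrow> nat \<Rightarrow> nat \<Rightarrow> nat \<Rightarrow> nat" where
  "stay_walks n l a b = (n choose l) * chamber_walks (n - l) a b"

lemma stay_walks_Suc: "stay_walks (Suc n) l a b = transfer (stay_walks n) l a b"
proof (cases l)
  case 0
  then show ?thesis unfolding stay_walks_def transfer_def by simp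
next
  case (Suc k)
  have eta: "stay_walks n l' = (\<lambda>a b. (n choose l') * chamber_walks (n - l') a b)" for l'
    by (simp add: fun_eq_iff stay_walks_def)
  have shift: "(n choose Suc k) * chamber_walks (n - k) a b = (n choose Suc k) * moves (chamber_walks (n - Suc k)) a b"
  proof (cases "Suc k \<le> n")
    case True
    then have "n - k = Suc (n - Suc k)" by simp
    then show ?thesis by simp
  qed simp
  have "stay_walks (Suc n) l a b = (n choose k) * chamber_walks (n - k) a b + (n choose Suc k) * chamber_walks (n - k) a b"
    using Suc by (simp add: stay_walks_def algebra_simps)
  also have "\<dots> = transfer (stay_walks n) l a b"
    using Suc by (simp add: shift eta stay_walks_def transfer_def moves_scale)
  finally show ?thesis .
qed

text \<open>Inclusion-exclusion over the \<open>(n - k) choose k\<close> ways to mark \<open>k\<close> disjoint pairs of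
  adjacent positions among \<open>n\<close>.\<close>
definition sieve :: "(nat \<Rightarrow> int) \<Rightarrow> nat \<Rightarrow> int" where
  "sieve g n = (\<Sum>k\<le>n. (-1)^k * int ((n - k) choose k) * g (n - 2 * k))"

lemma sieve_add: "sieve (\<lambda>n. f n + g n) N = sieve f N + sieve g N"
  unfolding sieve_def by (simp add: algebra_simps sum.distrib)

lemma sieve_if: "sieve (\<lambda>n. if c then f n else 0) N = (if c then sieve f N else 0)"
  unfolding sieve_def by simp

lemma sieve_transfer: "sieve (\<lambda>n. transfer (G n) l a b) N = transfer (\<lambda>l a b. sieve (\<lambda>n. G n l a b) N) l a b"
  unfolding transfer_def moves_def by (simp add: sieve_add sieve_if)

lemma sieve_0: "sieve g 0 = g 0"
  unfolding sieve_def by simp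

lemma sieve_1: "sieve g (Suc 0) = g (Suc 0)"
  unfolding sieve_def by simp

lemma sieve_Suc_Suc: "sieve g (Suc (Suc m)) = sieve (\<lambda>n. g (Suc n)) (Suc m) - sieve g m"
proof -
  define A where "A k = (-1)^k * int ((Suc m - k) choose k) * g (Suc (Suc m) - 2 * k)" for k
  define B where "B k = (if k = 0 then 0 else (-1)^k * int ((Suc m - k) choose (k - 1)) * g (Suc (Suc m) - 2 * k))" for k
  have "sieve g (Suc (Suc m)) = (\<Sum>k\<le>Suc m. (-1)^k * int ((Suc (Suc m) - k) choose k) * g (Suc (Suc m) - 2 * k))"
    unfolding sieve_def by (simp add: sum.atMost_Suc)
  also have "\<dots> = (\<Sum>k\<le>Suc m. A k + B k)"
  proof (rule sum.cong[OF refl])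
    fix k assume "k \<in> {..Suc m}"
    then show "(-1)^k * int ((Suc (Suc m) - k) choose k) * g (Suc (Suc m) - 2 * k) = A k + B k"
      by (cases k) (auto simp: A_def B_def Suc_diff_le algebra_simps)
  qed
  also have "(\<Sum>k\<le>Suc m. A k) = sieve (\<lambda>n. g (Suc n)) (Suc m)"
    unfolding sieve_def
  proof (rule sum.cong[OF refl])
    fix k
    show "A k = (-1)^k * int ((Suc m - k) choose k) * g (Suc (Suc m - 2 * k))"
    proof (cases "2 * k \<le> Suc m")
      case True
      then have "Suc (Suc m) - 2 * k = Suc (Suc m - 2 * k)" by simp
      then show ?thesis unfolding A_def by simp
    qed (simp add: A_def binomial_eq_0)
  qed
  moreover have "(\<Sum>k\<le>Suc m. B k) = - sieve g m"
    unfolding sum.atMost_Suc_shift by (simp add: B_def sieve_def sum_negf)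
  ultimately show ?thesis by (simp add: sum.distrib)
qed

text \<open>Walks avoiding the factor \<open>Add1 Rem1\<close>; \<open>after_add1\<close> records whether the previous step
  was \<open>Add1\<close>, in which case the move \<open>(a, b) \<mapsto> (a - 1, b)\<close> is forbidden.\<close>
fun rna_walks :: "nat \<Rightarrow> bool \<Rightarrow> nat \<Rightarrow> nat \<Rightarrow> nat \<Rightarrow> nat" where
  "rna_walks 0 after_add1 l a b = (if l = 0 \<and> a = 0 \<and> b = 0 then 1 else 0)"
| "rna_walks (Suc n) after_add1 l a b =
     (if 0 < l then rna_walks n False (l - 1) a b else 0) + rna_walks n True l (Suc a) b
   + (if b < a then rna_walks n False l a (Suc b) else 0)
   + (if b < a \<and> \<not> after_add1 then rna_walks n False l (a - 1) b else 0)
   + (if 0 < b then rna_walks n False l a (b - 1) else 0)"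

lemma rna_walks_1: "rna_walks (Suc 0) False l a b = transfer (rna_walks 0 False) l a b"
  unfolding transfer_def moves_def by simp

lemma rna_walks_after_add1:
  "rna_walks (Suc n) True l a b = rna_walks (Suc n) False l a b - (if b < a then rna_walks n False l (a - 1) b else 0)"
  by simp

lemma rna_walks_Suc_Suc:
  assumes "b \<le> a"
  shows "int (rna_walks (Suc (Suc n)) False l a b) =
    transfer (\<lambda>l a b. int (rna_walks (Suc n) False l a b)) l a b - int (rna_walks n False l a b)"
proof -
  have "rna_walks n False l a b \<le> rna_walks (Suc n) False l (Suc a) b"
    using assms by simp
  then have "int (rna_walks (Suc n) True l (Suc a) b) = int (rna_walks (Suc n) False l (Suc a) b) - int (rna_walks n False l a b)"
    using assms rna_walks_after_add1[of n l "Suc a" b] by (simp del: rna_walks.simps(2) add: of_nat_diff)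
  then show ?thesis unfolding transfer_def moves_def
    by (simp only: rna_walks.simps(2)[of "Suc n" False]) (simp del: rna_walks.simps)
qed

lemma rna_walks_eq_sieve:
  "b \<le> a \<Longrightarrow> int (rna_walks n False l a b) = sieve (\<lambda>n. int (stay_walks n l a b)) n"
proof (induction n arbitrary: l a b rule: less_induct)
  case (less n)
  define H where "H n l a b = sieve (\<lambda>n. int (stay_walks n l a b)) n" for n l a b
  have H_Suc: "sieve (\<lambda>n. int (stay_walks (Suc n) l a b)) N = transfer (H N) l a b" for N l a b
    unfolding H_def stay_walks_Suc of_nat_transfer by (rule sieve_transfer)
  have IH: "\<And>m. m < n \<Longrightarrow> transfer (\<lambda>l a b. int (rna_walks m False l a b)) l a b = transfer (H m) l a b"
    using less.IH less.prems by (intro transfer_cong) (auto simp: H_def)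
  consider "n = 0" | "n = Suc 0" | m where "n = Suc (Suc m)"
    by (metis not0_implies_Suc)
  then show ?case
  proof cases
    case 1
    then show ?thesis by (simp add: sieve_0 stay_walks_def)
  next
    case 2
    have "int (rna_walks (Suc 0) False l a b) = transfer (H 0) l a b"
      using IH[of 0] 2 unfolding rna_walks_1 of_nat_transfer by simp
    moreover have "sieve (\<lambda>n. int (stay_walks n l a b)) (Suc 0) = transfer (H 0) l a b"
      using H_Suc[where N = 0] by (simp only: sieve_1 sieve_0)
    ultimately show ?thesis using 2 by simp
  next
    case 3
    then have "int (rna_walks m False l a b) = H m l a b"
      "transfer (\<lambda>l a b. int (rna_walks (Suc m) False l a b)) l a b = transfer (H (Suc m)) l a b"
      using less.IH[of m] less.prems IH[of "Suc m"] by (simp_all add: H_def)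
    moreover have "H (Suc (Suc m)) l a b = transfer (H (Suc m)) l a b - H m l a b"
      using H_Suc[where N = "Suc m"] unfolding H_def sieve_Suc_Suc by (simp only:)
    ultimately show ?thesis unfolding 3 rna_walks_Suc_Suc[OF less.prems] by (simp add: H_def)
  qed
qed

lemma rna_walks_formula:
  "int (rna_walks n False l 0 0) =
    (\<Sum>k = 0..(n - l) div 2. (-1)^k * int ((n - k) choose k) * int ((n - 2 * k) choose l) * catalan_hankel (n - l - 2 * k))"
proof -
  have "int (rna_walks n False l 0 0) =
      (\<Sum>k\<le>n. (-1)^k * int ((n - k) choose k) * int ((n - 2 * k) choose l) * catalan_hankel (n - l - 2 * k))"
    unfolding rna_walks_eq_sieve[OF order.refl] sieve_def stay_walks_def
    by (simp add: chamber_walks_origin mult.assoc add.commute)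
  also have "\<dots> = (\<Sum>k = 0..(n - l) div 2. (-1)^k * int ((n - k) choose k) * int ((n - 2 * k) choose l) * catalan_hankel (n - l - 2 * k))"
    by (rule sum.mono_neutral_right) (auto simp: binomial_eq_0)
  finally show ?thesis .
qed

section \<open>Two-row tableaux\<close>

datatype step = Stay | Add1 | Add2 | Rem1 | Rem2

definition is_add :: "step \<Rightarrow> bool" where "is_add s \<longleftrightarrow> s = Add1 \<or> s = Add2"

definition is_rem :: "step \<Rightarrow> bool" where "is_rem s \<longleftrightarrow> s = Rem1 \<or> s = Rem2"

lemma not_is_add_and_is_rem: "\<not> (is_add s \<and> is_rem s)"
  by (cases s) (auto simp: is_add_def is_rem_def)

text \<open>A tableau is given by its two rows. The counting condition says that the \<open>k\<close>-th entry
  of row 2 exceeds the \<open>k\<close>-th entry of row 1.\<close>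
type_synonym tableau = "nat set \<times> nat set"

definition standard_tableau :: "tableau \<Rightarrow> bool" where
  "standard_tableau S \<longleftrightarrow> finite (fst S) \<and> finite (snd S) \<and> fst S \<inter> snd S = {} \<and>
     (\<forall>y\<in>snd S. card {z\<in>snd S. z \<le> y} \<le> card {z\<in>fst S. z < y})"

definition entries :: "tableau \<Rightarrow> nat set" where "entries S = fst S \<union> snd S"

definition shape :: "tableau \<Rightarrow> nat \<times> nat" where "shape S = (card (fst S), card (snd S))"

fun move :: "step \<Rightarrow> nat \<times> nat \<Rightarrow> nat \<times> nat" where
  "move Stay s = s"
| "move Add1 (a, b) = (Suc a, b)"
| "move Add2 (a, b) = (a, Suc b)"
| "move Rem1 (a, b) = (a - 1, b)"
| "move Rem2 (a, b) = (a, b - 1)"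

fun allowed :: "step \<Rightarrow> nat \<times> nat \<Rightarrow> bool" where
  "allowed Stay s = True"
| "allowed Add1 s = True"
| "allowed Add2 (a, b) = (b < a)"
| "allowed Rem1 (a, b) = (b < a)"
| "allowed Rem2 (a, b) = (0 < b)"

text \<open>The entry leaving the tableau at a removal step; \<open>Rem2\<close> is reverse row insertion: the
  largest entry of row 2 returns to row 1 and evicts the largest entry of row 1 below it.\<close>
definition evicted :: "step \<Rightarrow> tableau \<Rightarrow> nat" where
  "evicted s S = (if s = Rem1 then Max (fst S) else Max {z \<in> fst S. z < Max (snd S)})"

fun tab_step :: "nat \<Rightarrow> step \<Rightarrow> tableau \<Rightarrow> tableau" where
  "tab_step t Stay S = S"
| "tab_step t Add1 S = (insert t (fst S), snd S)"
| "tab_step t Add2 S = (fst S, insert t (snd S))"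
| "tab_step t Rem1 S = (fst S - {evicted Rem1 S}, snd S)"
| "tab_step t Rem2 S = (insert (Max (snd S)) (fst S - {evicted Rem2 S}), snd S - {Max (snd S)})"

lemma standard_tableauD:
  assumes "standard_tableau S"
  shows "finite (fst S)" "finite (snd S)" "fst S \<inter> snd S = {}"
    "y \<in> snd S \<Longrightarrow> card {z\<in>snd S. z \<le> y} \<le> card {z\<in>fst S. z < y}"
  using assms unfolding standard_tableau_def by auto

lemma card_row2_le_below_Max:
  assumes ok: "standard_tableau S" and ne: "snd S \<noteq> {}"
  shows "card (snd S) \<le> card {z\<in>fst S. z < Max (snd S)}"
proof -
  have "{z\<in>snd S. z \<le> Max (snd S)} = snd S" using standard_tableauD(2)[OF ok] by auto
  then show ?thesis using standard_tableauD(2,4)[OF ok] ne by (metis Max_in)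
qed

lemma card_row2_le_row1: "standard_tableau S \<Longrightarrow> card (snd S) \<le> card (fst S)"
  using card_row2_le_below_Max[of S] card_mono[OF standard_tableauD(1), of S "{z\<in>fst S. z < Max (snd S)}"]
  by (cases "snd S = {}") auto

lemma evicted_Rem2:
  assumes ok: "standard_tableau S" and ne: "snd S \<noteq> {}"
  shows "evicted Rem2 S \<in> fst S" "evicted Rem2 S < Max (snd S)"
    "\<And>z. z \<in> fst S \<Longrightarrow> z < Max (snd S) \<Longrightarrow> z \<le> evicted Rem2 S"
proof -
  have fin: "finite {z\<in>fst S. z < Max (snd S)}" using standard_tableauD(1)[OF ok] by simp
  have "0 < card (snd S)" using ne standard_tableauD(2)[OF ok] by (simp add: card_gt_0_iff)
  then have ne': "{z\<in>fst S. z < Max (snd S)} \<noteq> {}" using card_row2_le_below_Max[OF ok ne] by (metis card.empty leD)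
  have "evicted Rem2 S = Max {z\<in>fst S. z < Max (snd S)}" unfolding evicted_def by simp
  then have "evicted Rem2 S \<in> {z\<in>fst S. z < Max (snd S)}" using Max_in[OF fin ne'] by simp
  then show "evicted Rem2 S \<in> fst S" "evicted Rem2 S < Max (snd S)" by auto
  show "\<And>z. z \<in> fst S \<Longrightarrow> z < Max (snd S) \<Longrightarrow> z \<le> evicted Rem2 S"
    unfolding evicted_def using fin by simp
qed

lemma tab_step_Add1:
  assumes ok: "standard_tableau S" and lt: "\<forall>x\<in>entries S. x < t"
  shows "standard_tableau (tab_step t Add1 S)" "shape (tab_step t Add1 S) = move Add1 (shape S)"
    "entries (tab_step t Add1 S) = insert t (entries S)"
proof -
  obtain R1 R2 where S: "S = (R1, R2)" by fastforce
  have fin: "finite R1" "finite R2" and dis: "R1 \<inter> R2 = {}"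
    and cs: "\<forall>y\<in>R2. card {z\<in>R2. z \<le> y} \<le> card {z\<in>R1. z < y}" using ok S unfolding standard_tableau_def by auto
  have tR: "t \<notin> R1" "t \<notin> R2" using lt S unfolding entries_def by auto
  have "\<forall>y\<in>R2. card {z\<in>R2. z \<le> y} \<le> card {z\<in>insert t R1. z < y}"
  proof
    fix y assume y: "y \<in> R2"
    have "card {z\<in>R1. z < y} \<le> card {z\<in>insert t R1. z < y}" using fin by (intro card_mono) auto
    then show "card {z\<in>R2. z \<le> y} \<le> card {z\<in>insert t R1. z < y}" using cs y by (meson le_trans)
  qed
  then show "standard_tableau (tab_step t Add1 S)" using fin dis tR S unfolding standard_tableau_def by auto
  show "shape (tab_step t Add1 S) = move Add1 (shape S)" using S fin tR unfolding shape_def by simp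
  show "entries (tab_step t Add1 S) = insert t (entries S)" using S unfolding entries_def by auto
qed

lemma tab_step_Add2:
  assumes ok: "standard_tableau S" and lt: "\<forall>x\<in>entries S. x < t" and al: "allowed Add2 (shape S)"
  shows "standard_tableau (tab_step t Add2 S)" "shape (tab_step t Add2 S) = move Add2 (shape S)"
    "entries (tab_step t Add2 S) = insert t (entries S)"
proof -
  obtain R1 R2 where S: "S = (R1, R2)" by fastforce
  have fin: "finite R1" "finite R2" and dis: "R1 \<inter> R2 = {}"
    and cs: "\<forall>y\<in>R2. card {z\<in>R2. z \<le> y} \<le> card {z\<in>R1. z < y}" using ok S unfolding standard_tableau_def by auto
  have tR: "t \<notin> R1" "t \<notin> R2" and R2t: "\<forall>x\<in>R2. x < t" and R1t: "\<forall>x\<in>R1. x < t"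
    using lt S unfolding entries_def by auto
  have ab: "card R2 < card R1" using al S unfolding shape_def by simp
  have "\<forall>y\<in>insert t R2. card {z\<in>insert t R2. z \<le> y} \<le> card {z\<in>R1. z < y}"
  proof
    fix y assume y: "y \<in> insert t R2"
    show "card {z\<in>insert t R2. z \<le> y} \<le> card {z\<in>R1. z < y}"
    proof (cases "y = t")
      case True
      then have "{z\<in>insert t R2. z \<le> y} = insert t R2" "{z\<in>R1. z < y} = R1" using R1t R2t by auto
      then show ?thesis using fin tR ab by simp
    next
      case False
      then have "y \<in> R2" "{z\<in>insert t R2. z \<le> y} = {z\<in>R2. z \<le> y}" using y R2t by auto
      then show ?thesis using cs by simp
    qed
  qed
  then show "standard_tableau (tab_step t Add2 S)" using fin dis tR S unfolding standard_tableau_def by auto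
  show "shape (tab_step t Add2 S) = move Add2 (shape S)" using S fin tR unfolding shape_def by simp
  show "entries (tab_step t Add2 S) = insert t (entries S)" using S unfolding entries_def by auto
qed

lemma tab_step_Rem1:
  assumes ok: "standard_tableau S" and al: "allowed Rem1 (shape S)"
  shows "standard_tableau (tab_step t Rem1 S)" "shape (tab_step t Rem1 S) = move Rem1 (shape S)"
    "entries (tab_step t Rem1 S) = entries S - {evicted Rem1 S}" "evicted Rem1 S \<in> fst S"
proof -
  obtain R1 R2 where S: "S = (R1, R2)" by fastforce
  have fin: "finite R1" "finite R2" and dis: "R1 \<inter> R2 = {}"
    and cs: "\<forall>y\<in>R2. card {z\<in>R2. z \<le> y} \<le> card {z\<in>R1. z < y}" using ok S unfolding standard_tableau_def by auto
  have ab: "card R2 < card R1" using al S unfolding shape_def by simp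
  define m where "m = Max R1"
  have ev: "evicted Rem1 S = m" unfolding evicted_def m_def S by simp
  have "R1 \<noteq> {}" using ab by auto
  then have mR: "m \<in> R1" and mge: "\<And>z. z \<in> R1 \<Longrightarrow> z \<le> m" using fin unfolding m_def by auto
  have "\<forall>y\<in>R2. card {z\<in>R2. z \<le> y} \<le> card {z\<in>R1 - {m}. z < y}"
  proof
    fix y assume yR: "y \<in> R2"
    show "card {z\<in>R2. z \<le> y} \<le> card {z\<in>R1 - {m}. z < y}"
    proof (cases "m < y")
      case True
      then have e: "{z\<in>R1 - {m}. z < y} = R1 - {m}" using mge by fastforce
      have "card {z\<in>R2. z \<le> y} \<le> card R2" using fin by (intro card_mono) auto
      also have "\<dots> \<le> card (R1 - {m})" using ab mR fin by simp
      finally show ?thesis unfolding e .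
    next
      case False
      then have "y < m" using dis mR yR by (auto simp: nat_neq_iff)
      then have "{z\<in>R1 - {m}. z < y} = {z\<in>R1. z < y}" by auto
      then show ?thesis using cs yR by simp
    qed
  qed
  then show "standard_tableau (tab_step t Rem1 S)" using fin dis S ev unfolding standard_tableau_def by auto
  show "shape (tab_step t Rem1 S) = move Rem1 (shape S)" using S fin mR ev unfolding shape_def by simp
  show "entries (tab_step t Rem1 S) = entries S - {evicted Rem1 S}" using S dis mR ev unfolding entries_def by auto
  show "evicted Rem1 S \<in> fst S" using S mR ev by simp
qed

lemma standard_tableau_tab_step_Rem2:
  assumes ok: "standard_tableau S" and ne: "snd S \<noteq> {}"
  shows "standard_tableau (tab_step t Rem2 S)"
proof -
  obtain R1 R2 where S: "S = (R1, R2)" by fastforce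
  have fin: "finite R1" "finite R2" and dis: "R1 \<inter> R2 = {}"
    and cs: "\<forall>y\<in>R2. card {z\<in>R2. z \<le> y} \<le> card {z\<in>R1. z < y}" using ok S unfolding standard_tableau_def by auto
  define y0 where "y0 = Max R2"
  define x where "x = evicted Rem2 S"
  have y0R: "y0 \<in> R2" and y0ge: "\<And>z. z \<in> R2 \<Longrightarrow> z \<le> y0" using fin ne S unfolding y0_def by auto
  have xR1: "x \<in> R1" "x < y0" and xge: "\<And>z. z \<in> R1 \<Longrightarrow> z < y0 \<Longrightarrow> z \<le> x"
    using evicted_Rem2[OF ok] ne S unfolding x_def y0_def by auto
  define X where "X = {z\<in>R1. z < y0}"
  have cR2X: "card R2 \<le> card X" using card_row2_le_below_Max[OF ok] ne S unfolding X_def y0_def by simp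
  have "\<forall>y\<in>R2 - {y0}. card {z\<in>R2 - {y0}. z \<le> y} \<le> card {z\<in>insert y0 (R1 - {x}). z < y}"
  proof
    fix y assume yR: "y \<in> R2 - {y0}"
    then have yl: "y < y0" using y0ge by fastforce
    have e1: "{z\<in>R2 - {y0}. z \<le> y} = {z\<in>R2. z \<le> y}" using yl by auto
    show "card {z\<in>R2 - {y0}. z \<le> y} \<le> card {z\<in>insert y0 (R1 - {x}). z < y}"
    proof (cases "x < y")
      case True
      have e2: "{z\<in>insert y0 (R1 - {x}). z < y} = X - {x}"
        using yl True xge unfolding X_def by (auto intro: le_less_trans)
      have "card {z\<in>R2. z \<le> y} \<le> card (R2 - {y0})" using fin yl by (intro card_mono) auto
      also have "\<dots> = card R2 - 1" using y0R fin by simp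
      also have "\<dots> \<le> card X - 1" using cR2X by simp
      also have "\<dots> = card (X - {x})" using xR1 fin unfolding X_def by simp
      finally show ?thesis unfolding e1 e2 .
    next
      case False
      then have "{z\<in>insert y0 (R1 - {x}). z < y} = {z\<in>R1. z < y}" using yl by auto
      then show ?thesis unfolding e1 using cs yR by simp
    qed
  qed
  then show ?thesis using S fin dis unfolding standard_tableau_def y0_def x_def by auto
qed

lemma tab_step_Rem2:
  assumes ok: "standard_tableau S" and al: "allowed Rem2 (shape S)"
  shows "standard_tableau (tab_step t Rem2 S)" "shape (tab_step t Rem2 S) = move Rem2 (shape S)"
    "entries (tab_step t Rem2 S) = entries S - {evicted Rem2 S}" "evicted Rem2 S \<in> fst S"
proof -
  obtain R1 R2 where S: "S = (R1, R2)" by fastforce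
  have fin: "finite R1" "finite R2" and dis: "R1 \<inter> R2 = {}" using ok S unfolding standard_tableau_def by auto
  have ne: "R2 \<noteq> {}" using al S unfolding shape_def by auto
  define y0 where "y0 = Max R2"
  define x where "x = evicted Rem2 S"
  have y0R: "y0 \<in> R2" using fin ne unfolding y0_def by auto
  have xR1: "x \<in> R1" "x < y0" using evicted_Rem2[OF ok] ne S unfolding x_def y0_def by auto
  have y0nR1: "y0 \<notin> R1" and xnR2: "x \<notin> R2" using dis y0R xR1 by auto
  have P: "tab_step t Rem2 S = (insert y0 (R1 - {x}), R2 - {y0})" using S unfolding y0_def x_def by simp
  show "standard_tableau (tab_step t Rem2 S)" using standard_tableau_tab_step_Rem2[OF ok] ne S by simp
  have "card R1 > 0" using xR1 fin card_gt_0_iff by blast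
  then show "shape (tab_step t Rem2 S) = move Rem2 (shape S)" unfolding P shape_def using S fin y0nR1 xR1 y0R
    by (simp add: card_insert_if)
  show "entries (tab_step t Rem2 S) = entries S - {evicted Rem2 S}" unfolding P entries_def x_def[symmetric]
    using S y0R xR1 xnR2 y0nR1 by auto
  show "evicted Rem2 S \<in> fst S" using S xR1 unfolding x_def by simp
qed

lemma tab_step_props:
  assumes ok: "standard_tableau S" and lt: "\<forall>x\<in>entries S. x < t" and al: "allowed s (shape S)"
  shows "standard_tableau (tab_step t s S)" "shape (tab_step t s S) = move s (shape S)"
    "entries (tab_step t s S) = (if is_add s then insert t (entries S)
       else if is_rem s then entries S - {evicted s S} else entries S)"
    "is_rem s \<Longrightarrow> evicted s S \<in> fst S"
  using tab_step_Add1[OF ok lt] tab_step_Add2[OF ok lt] tab_step_Rem1[OF ok] tab_step_Rem2[OF ok] ok al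
  by (cases s; simp add: is_add_def is_rem_def)+

text \<open>RSK row insertion for tableaux with at most two rows.\<close>
definition row_insert :: "nat \<Rightarrow> tableau \<Rightarrow> tableau option" where
  "row_insert x S = (if (\<forall>z\<in>fst S. z < x) then Some (insert x (fst S), snd S)
     else (let y = Min {z\<in>fst S. x < z} in
           if (\<forall>z\<in>snd S. z < y) then Some (insert x (fst S - {y}), insert y (snd S)) else None))"

lemma row_insert_cases:
  assumes "row_insert x S = Some S'"
  obtains (append) "\<forall>z\<in>fst S. z < x" "S' = (insert x (fst S), snd S)"
  | (bump) "\<not> (\<forall>z\<in>fst S. z < x)" "\<forall>z\<in>snd S. z < Min {z\<in>fst S. x < z}"
      "S' = (insert x (fst S - {Min {z\<in>fst S. x < z}}), insert (Min {z\<in>fst S. x < z}) (snd S))"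
  using assms unfolding row_insert_def Let_def by (auto split: if_splits)

lemma Rem1_undoes_append:
  assumes ok: "standard_tableau S" and xn: "x \<notin> entries S" and all: "\<forall>z\<in>fst S. z < x"
    and S': "S' = (insert x (fst S), snd S)"
  shows "standard_tableau S'" "entries S' = insert x (entries S)" "allowed Rem1 (shape S')"
    "tab_step t Rem1 S' = S" "evicted Rem1 S' = x" "move Rem1 (shape S') = shape S"
proof -
  obtain R1 R2 where S: "S = (R1, R2)" by fastforce
  have fin: "finite R1" "finite R2" and dis: "R1 \<inter> R2 = {}"
    and cs: "\<forall>y\<in>R2. card {z\<in>R2. z \<le> y} \<le> card {z\<in>R1. z < y}" using ok S unfolding standard_tableau_def by auto
  have xR: "x \<notin> R1" "x \<notin> R2" using xn S unfolding entries_def by auto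
  have "\<forall>y\<in>R2. card {z\<in>R2. z \<le> y} \<le> card {z\<in>insert x R1. z < y}"
  proof
    fix y assume y: "y \<in> R2"
    have "card {z\<in>R1. z < y} \<le> card {z\<in>insert x R1. z < y}" using fin by (intro card_mono) auto
    then show "card {z\<in>R2. z \<le> y} \<le> card {z\<in>insert x R1. z < y}" using cs y by (meson le_trans)
  qed
  then show "standard_tableau S'" using fin dis xR S S' unfolding standard_tableau_def by auto
  show "entries S' = insert x (entries S)" using S S' unfolding entries_def by auto
  show "allowed Rem1 (shape S')" using S S' fin xR card_row2_le_row1[OF ok] unfolding shape_def by simp
  have mx: "evicted Rem1 S' = x" using fin all S S' unfolding evicted_def by (simp add: Max_insert2 less_imp_le)
  then show "tab_step t Rem1 S' = S" using S S' xR by simp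
  show "evicted Rem1 S' = x" by (rule mx)
  show "move Rem1 (shape S') = shape S" using S S' fin xR unfolding shape_def by simp
qed

lemma standard_tableau_bump:
  assumes ok: "standard_tableau (R1, R2)" and xR: "x \<notin> R1" "x \<notin> R2" and yY: "y \<in> R1" "x < y"
    and below: "\<And>z. z \<in> R1 \<Longrightarrow> z < y \<Longrightarrow> z < x" and R2y: "\<forall>z\<in>R2. z < y"
  shows "standard_tableau (insert x (R1 - {y}), insert y R2)"
proof -
  have fin: "finite R1" "finite R2" and dis: "R1 \<inter> R2 = {}"
    and cs: "\<forall>y\<in>R2. card {z\<in>R2. z \<le> y} \<le> card {z\<in>R1. z < y}" using ok unfolding standard_tableau_def by auto
  have yR2: "y \<notin> R2" using dis yY by auto
  have c2: "card R2 \<le> card {z\<in>R1. z < y}"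
  proof (cases "R2 = {}")
    case False
    have "card R2 \<le> card {z\<in>R1. z < Max R2}" using card_row2_le_below_Max[OF ok] False by simp
    also have "\<dots> \<le> card {z\<in>R1. z < y}"
      using fin R2y Max_in[OF fin(2) False] by (intro card_mono) auto
    finally show ?thesis .
  qed simp
  have "\<forall>v\<in>insert y R2. card {z\<in>insert y R2. z \<le> v} \<le> card {z\<in>insert x (R1 - {y}). z < v}"
  proof
    fix v assume v: "v \<in> insert y R2"
    show "card {z\<in>insert y R2. z \<le> v} \<le> card {z\<in>insert x (R1 - {y}). z < v}"
    proof (cases "v = y")
      case True
      have "{z\<in>insert y R2. z \<le> v} = insert y R2" "{z\<in>insert x (R1 - {y}). z < v} = insert x {z\<in>R1. z < y}"
        using True R2y yY by auto
      then show ?thesis using c2 fin xR yR2 by simp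
    next
      case False
      then have vR: "v \<in> R2" and vy: "v < y" using v R2y by auto
      have e1: "{z\<in>insert y R2. z \<le> v} = {z\<in>R2. z \<le> v}" using vy by auto
      have "card {z\<in>R1. z < v} \<le> card {z\<in>insert x (R1 - {y}). z < v}" using fin vy by (intro card_mono) auto
      then show ?thesis unfolding e1 using cs vR by (meson le_trans)
    qed
  qed
  moreover have "insert x (R1 - {y}) \<inter> insert y R2 = {}" using dis xR yY by auto
  ultimately show ?thesis using fin unfolding standard_tableau_def by simp
qed

lemma Rem2_undoes_bump:
  assumes ok: "standard_tableau S" and xn: "x \<notin> entries S" and nall: "\<not> (\<forall>z\<in>fst S. z < x)"
    and y: "y = Min {z\<in>fst S. x < z}" and all2: "\<forall>z\<in>snd S. z < y"
    and S': "S' = (insert x (fst S - {y}), insert y (snd S))"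
  shows "standard_tableau S'" "entries S' = insert x (entries S)" "allowed Rem2 (shape S')"
    "tab_step t Rem2 S' = S" "evicted Rem2 S' = x" "move Rem2 (shape S') = shape S"
proof -
  obtain R1 R2 where S: "S = (R1, R2)" by fastforce
  have fin: "finite R1" "finite R2" and dis: "R1 \<inter> R2 = {}" using ok S unfolding standard_tableau_def by auto
  have xR: "x \<notin> R1" "x \<notin> R2" using xn S unfolding entries_def by auto
  have neY: "{z\<in>R1. x < z} \<noteq> {}" using nall S xR by (auto simp: not_less order.order_iff_strict)
  have yY: "y \<in> R1" "x < y" using Min_in[OF _ neY] fin y S by auto
  have ymin: "\<And>z. z \<in> R1 \<Longrightarrow> x < z \<Longrightarrow> y \<le> z" using fin y S by simp
  have below: "z < x" if "z \<in> R1" "z < y" for z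
  proof -
    have "\<not> x < z" using ymin[OF that(1)] that(2) by auto
    moreover have "z \<noteq> x" using that xR by auto
    ultimately show ?thesis by simp
  qed
  have yR2: "y \<notin> R2" using dis yY by auto
  have R2y: "\<forall>z\<in>R2. z < y" using all2 S by simp
  show "standard_tableau S'" using standard_tableau_bump[OF ok[unfolded S] xR yY below R2y] S S' by simp
  show "entries S' = insert x (entries S)" using S S' yY unfolding entries_def by auto
  show "allowed Rem2 (shape S')" using S S' fin unfolding shape_def by (simp add: card_gt_0_iff)
  have m2: "Max (insert y R2) = y" using fin R2y by (simp add: Max_insert2 less_imp_le)
  have e: "{z\<in>insert x (R1 - {y}). z < y} = insert x {z\<in>R1. z < y}" using yY by auto
  have "evicted Rem2 S' = Max {z\<in>fst S'. z < Max (snd S')}" by (simp add: evicted_def)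
  also have "\<dots> = Max (insert x {z\<in>R1. z < y})" unfolding S' S fst_conv snd_conv m2 e ..
  also have "\<dots> = x" using fin below by (intro Max_eqI) (auto intro: less_imp_le)
  finally have m1: "evicted Rem2 S' = x" .
  show "tab_step t Rem2 S' = S" using S S' m1 m2 yY xR yR2 by auto
  show "evicted Rem2 S' = x" by (rule m1)
  have "card R1 > 0" using yY fin card_gt_0_iff by blast
  then show "move Rem2 (shape S') = shape S" using S S' fin xR yY yR2 unfolding shape_def
    by (simp add: card_insert_if)
qed

lemma Add1_undoes_delete:
  assumes ok: "standard_tableau S" and tR: "t \<in> fst S" and le: "\<forall>z\<in>entries S. z \<le> t"
    and S': "S' = (fst S - {t}, snd S)"
  shows "standard_tableau S'" "entries S' = entries S - {t}" "allowed Add1 (shape S')"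
    "tab_step t Add1 S' = S" "move Add1 (shape S') = shape S"
proof -
  obtain R1 R2 where S: "S = (R1, R2)" by fastforce
  have fin: "finite R1" "finite R2" and dis: "R1 \<inter> R2 = {}"
    and cs: "\<forall>y\<in>R2. card {z\<in>R2. z \<le> y} \<le> card {z\<in>R1. z < y}" using ok S unfolding standard_tableau_def by auto
  have t1: "t \<in> R1" "t \<notin> R2" using tR dis S by auto
  have R2t: "\<forall>y\<in>R2. y < t" using le S t1 unfolding entries_def by (auto intro: le_neq_implies_less)
  have "\<forall>y\<in>R2. card {z\<in>R2. z \<le> y} \<le> card {z\<in>R1 - {t}. z < y}"
  proof
    fix y assume y: "y \<in> R2"
    then have "{z\<in>R1 - {t}. z < y} = {z\<in>R1. z < y}" using R2t by auto
    then show "card {z\<in>R2. z \<le> y} \<le> card {z\<in>R1 - {t}. z < y}" using cs y by simp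
  qed
  then show "standard_tableau S'" using S S' fin dis unfolding standard_tableau_def by auto
  show "entries S' = entries S - {t}" using S S' t1 unfolding entries_def by auto
  show "allowed Add1 (shape S')" by simp
  show "tab_step t Add1 S' = S" using S S' t1 by auto
  have "card R1 > 0" using t1 fin card_gt_0_iff by blast
  then show "move Add1 (shape S') = shape S" using S S' fin t1 unfolding shape_def by simp
qed

lemma Add2_undoes_delete:
  assumes ok: "standard_tableau S" and tR: "t \<in> snd S" and le: "\<forall>z\<in>entries S. z \<le> t"
    and S': "S' = (fst S, snd S - {t})"
  shows "standard_tableau S'" "entries S' = entries S - {t}" "allowed Add2 (shape S')"
    "tab_step t Add2 S' = S" "move Add2 (shape S') = shape S"
proof -
  obtain R1 R2 where S: "S = (R1, R2)" by fastforce
  have fin: "finite R1" "finite R2" and dis: "R1 \<inter> R2 = {}"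
    and cs: "\<forall>y\<in>R2. card {z\<in>R2. z \<le> y} \<le> card {z\<in>R1. z < y}" using ok S unfolding standard_tableau_def by auto
  have t2: "t \<in> R2" "t \<notin> R1" using tR dis S by auto
  have "\<forall>y\<in>R2 - {t}. card {z\<in>R2 - {t}. z \<le> y} \<le> card {z\<in>R1. z < y}"
  proof
    fix y assume y: "y \<in> R2 - {t}"
    have "card {z\<in>R2 - {t}. z \<le> y} \<le> card {z\<in>R2. z \<le> y}" using fin by (intro card_mono) auto
    then show "card {z\<in>R2 - {t}. z \<le> y} \<le> card {z\<in>R1. z < y}" using cs y by (meson DiffD1 le_trans)
  qed
  then show "standard_tableau S'" using S S' fin dis unfolding standard_tableau_def by auto
  show "entries S' = entries S - {t}" using S S' t2 unfolding entries_def by auto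
  have "{z\<in>R2. z \<le> t} = R2" using le S unfolding entries_def by auto
  then have "card R2 \<le> card {z\<in>R1. z < t}" using cs t2 by metis
  also have "\<dots> \<le> card R1" using fin by (intro card_mono) auto
  finally have c: "card R2 \<le> card R1" .
  have c0: "card R2 > 0" using t2 fin card_gt_0_iff by blast
  show "allowed Add2 (shape S')" using S S' fin t2 c c0 unfolding shape_def by simp
  show "tab_step t Add2 S' = S" using S S' t2 by auto
  show "move Add2 (shape S') = shape S" using S S' fin t2 c0 unfolding shape_def by simp
qed

lemma row_insert_undoes_Rem1:
  assumes ok: "standard_tableau S" and al: "allowed Rem1 (shape S)"
  shows "row_insert (evicted Rem1 S) (tab_step t Rem1 S) = Some S"
    "\<forall>z\<in>fst (tab_step t Rem1 S). z < evicted Rem1 S"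
proof -
  have m: "evicted Rem1 S \<in> fst S" by (rule tab_step_Rem1(4)[OF ok al])
  have ev: "evicted Rem1 S = Max (fst S)" unfolding evicted_def by simp
  show lt: "\<forall>z\<in>fst (tab_step t Rem1 S). z < evicted Rem1 S"
    unfolding tab_step.simps fst_conv ev using Max_ge[OF standard_tableauD(1)[OF ok]]
    by (fastforce intro: le_neq_implies_less)
  show "row_insert (evicted Rem1 S) (tab_step t Rem1 S) = Some S"
    using lt m unfolding row_insert_def by (simp add: insert_absorb)
qed

lemma row_insert_undoes_Rem2:
  assumes ok: "standard_tableau S" and al: "allowed Rem2 (shape S)"
  shows "row_insert (evicted Rem2 S) (tab_step t Rem2 S) = Some S"
    "\<not> (\<forall>z\<in>fst (tab_step t Rem2 S). z < evicted Rem2 S)"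
proof -
  obtain R1 R2 where S: "S = (R1, R2)" by fastforce
  have fin: "finite R1" "finite R2" and dis: "R1 \<inter> R2 = {}" using ok S unfolding standard_tableau_def by auto
  have ne: "R2 \<noteq> {}" using al S unfolding shape_def by auto
  define y0 where "y0 = Max R2"
  define x where "x = evicted Rem2 S"
  have y0R: "y0 \<in> R2" and y0ge: "\<And>z. z \<in> R2 \<Longrightarrow> z \<le> y0" using fin ne unfolding y0_def by auto
  have xR1: "x \<in> R1" "x < y0" and xge: "\<And>z. z \<in> R1 \<Longrightarrow> z < y0 \<Longrightarrow> z \<le> x"
    using evicted_Rem2[OF ok] ne S unfolding x_def y0_def by auto
  have y0n: "y0 \<notin> R1" using dis y0R by auto
  have P: "tab_step t Rem2 S = (insert y0 (R1 - {x}), R2 - {y0})" using S unfolding y0_def x_def by simp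
  have nall: "\<not> (\<forall>z\<in>insert y0 (R1 - {x}). z < x)" using xR1 by auto
  then show "\<not> (\<forall>z\<in>fst (tab_step t Rem2 S). z < evicted Rem2 S)" unfolding P x_def[symmetric] by simp
  have mn: "Min {z\<in>insert y0 (R1 - {x}). x < z} = y0"
  proof (rule Min_eqI)
    fix z assume "z \<in> {z\<in>insert y0 (R1 - {x}). x < z}"
    then have "z = y0 \<or> (z \<in> R1 \<and> x < z)" by auto
    then show "y0 \<le> z" using xge[of z] by (meson leD le_less_linear order.refl)
  qed (use fin xR1 in auto)
  have all2: "\<forall>z\<in>R2 - {y0}. z < y0" using y0ge by fastforce
  have "row_insert x (insert y0 (R1 - {x}), R2 - {y0}) = Some (insert x (insert y0 (R1 - {x}) - {y0}), insert y0 (R2 - {y0}))"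
  proof -
    have "(\<forall>z\<in>insert y0 (R1 - {x}). z < x) = False" "(\<forall>z\<in>R2 - {y0}. z < y0) = True"
      using nall all2 by simp_all
    then show ?thesis unfolding row_insert_def fst_conv snd_conv Let_def mn by (simp only: if_False if_True)
  qed
  moreover have "insert x (insert y0 (R1 - {x}) - {y0}) = R1" "insert y0 (R2 - {y0}) = R2"
    using xR1 y0n y0R by auto
  ultimately show "row_insert (evicted Rem2 S) (tab_step t Rem2 S) = Some S"
    unfolding P x_def[symmetric] using S by simp
qed

lemma row_insert_SomeD:
  assumes ok: "standard_tableau S" and xn: "x \<notin> entries S" and ins: "row_insert x S = Some S'"
    and s: "s = (if \<forall>z\<in>fst S. z < x then Rem1 else Rem2)"
  shows "standard_tableau S'" "entries S' = insert x (entries S)" "allowed s (shape S')"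
    "tab_step t s S' = S" "evicted s S' = x" "move s (shape S') = shape S"
proof -
  have "standard_tableau S' \<and> entries S' = insert x (entries S) \<and> allowed s (shape S') \<and>
      tab_step t s S' = S \<and> evicted s S' = x \<and> move s (shape S') = shape S"
    using ins
  proof (cases rule: row_insert_cases)
    case append
    then show ?thesis using Rem1_undoes_append[OF ok xn append] s by auto
  next
    case bump
    then show ?thesis using Rem2_undoes_bump[OF ok xn bump(1) refl bump(2,3)] s by auto
  qed
  then show "standard_tableau S'" "entries S' = insert x (entries S)" "allowed s (shape S')"
    "tab_step t s S' = S" "evicted s S' = x" "move s (shape S') = shape S" by auto
qed

lemma delete_max_entry:
  assumes ok: "standard_tableau S" and t: "t \<in> entries S" and le: "\<forall>z\<in>entries S. z \<le> t"
    and S': "S' = (if t \<in> fst S then (fst S - {t}, snd S) else (fst S, snd S - {t}))"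
    and s: "s = (if t \<in> fst S then Add1 else Add2)"
  shows "standard_tableau S'" "entries S' = entries S - {t}" "allowed s (shape S')"
    "tab_step t s S' = S" "move s (shape S') = shape S"
proof -
  have "standard_tableau S' \<and> entries S' = entries S - {t} \<and> allowed s (shape S') \<and>
      tab_step t s S' = S \<and> move s (shape S') = shape S"
  proof (cases "t \<in> fst S")
    case True
    then show ?thesis using Add1_undoes_delete[OF ok True le] S' s by auto
  next
    case False
    then have "t \<in> snd S" using t unfolding entries_def by auto
    then show ?thesis using Add2_undoes_delete[OF ok _ le] False S' s by auto
  qed
  then show "standard_tableau S'" "entries S' = entries S - {t}" "allowed s (shape S')"
    "tab_step t s S' = S" "move s (shape S') = shape S" by auto
qed

section \<open>From walks to arc sets\<close>

fun walk_to_empty :: "nat \<times> nat \<Rightarrow> step list \<Rightarrow> bool" where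
  "walk_to_empty s [] \<longleftrightarrow> s = (0, 0)"
| "walk_to_empty s (x # w) \<longleftrightarrow> allowed x s \<and> walk_to_empty (move x s) w"

lemma walk_to_empty_iff:
  "walk_to_empty s w \<longleftrightarrow> (\<forall>k<length w. allowed (w!k) (fold move (take k w) s)) \<and> fold move w s = (0, 0)"
  by (induction w arbitrary: s) (auto simp: All_less_Suc2)

lemma fold_move_take_Suc: "k < length w \<Longrightarrow> fold move (take (Suc k) w) s = move (w!k) (fold move (take k w) s)"
  by (simp add: take_Suc_conv_app_nth)

text \<open>The tableau after the first \<open>k\<close> steps; step \<open>k + 1\<close> carries the label \<open>k + 1\<close>.\<close>
fun tab_seq :: "step list \<Rightarrow> nat \<Rightarrow> tableau" where
  "tab_seq w 0 = ({}, {})"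
| "tab_seq w (Suc k) = tab_step (Suc k) (w!k) (tab_seq w k)"

definition evicted_at :: "step list \<Rightarrow> nat \<Rightarrow> nat" where
  "evicted_at w t = evicted (w!(t - 1)) (tab_seq w (t - 1))"

definition arcs_of :: "step list \<Rightarrow> (nat \<times> nat) set" where
  "arcs_of w = {(evicted_at w t, t) | t. 1 \<le> t \<and> t \<le> length w \<and> is_rem (w!(t - 1))}"

definition open_arcs :: "(nat \<times> nat) set \<Rightarrow> nat \<Rightarrow> nat set" where
  "open_arcs A t = {x. \<exists>j. (x, j) \<in> A \<and> x \<le> t \<and> t < j}"

context
  fixes w :: "step list"
  assumes walk: "walk_to_empty (0, 0) w"
begin

lemma allowed_tab_seq: "k < length w \<Longrightarrow> allowed (w!k) (fold move (take k w) (0, 0))"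
  using walk unfolding walk_to_empty_iff by simp

lemma tab_seq_invariants:
  assumes "k \<le> length w"
  shows "standard_tableau (tab_seq w k)" "shape (tab_seq w k) = fold move (take k w) (0, 0)"
    "entries (tab_seq w k) \<subseteq> {1..k}"
proof -
  have "standard_tableau (tab_seq w k) \<and> shape (tab_seq w k) = fold move (take k w) (0, 0) \<and>
      entries (tab_seq w k) \<subseteq> {1..k}"
    using assms
  proof (induction k)
    case 0
    show ?case unfolding standard_tableau_def shape_def entries_def by simp
  next
    case (Suc k)
    then have k: "k < length w" and IH: "standard_tableau (tab_seq w k)"
      "shape (tab_seq w k) = fold move (take k w) (0, 0)" "entries (tab_seq w k) \<subseteq> {1..k}" by auto
    have lt: "\<forall>x\<in>entries (tab_seq w k). x < Suc k" using IH(3) by auto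
    note step = tab_step_props[OF IH(1) lt allowed_tab_seq[OF k, folded IH(2)]]
    show ?case using step IH fold_move_take_Suc[OF k] by auto
  qed
  then show "standard_tableau (tab_seq w k)" "shape (tab_seq w k) = fold move (take k w) (0, 0)"
    "entries (tab_seq w k) \<subseteq> {1..k}" by auto
qed

lemma entries_tab_seq_Suc:
  assumes "k < length w"
  shows "entries (tab_seq w (Suc k)) = (if is_add (w!k) then insert (Suc k) (entries (tab_seq w k))
      else if is_rem (w!k) then entries (tab_seq w k) - {evicted_at w (Suc k)} else entries (tab_seq w k))"
    "is_rem (w!k) \<Longrightarrow> evicted_at w (Suc k) \<in> fst (tab_seq w k)"
proof -
  note I = tab_seq_invariants[OF less_imp_le[OF assms]]
  have lt: "\<forall>x\<in>entries (tab_seq w k). x < Suc k" using I(3) by auto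
  note step = tab_step_props[OF I(1) lt allowed_tab_seq[OF assms, folded I(2)]]
  show "entries (tab_seq w (Suc k)) = (if is_add (w!k) then insert (Suc k) (entries (tab_seq w k))
      else if is_rem (w!k) then entries (tab_seq w k) - {evicted_at w (Suc k)} else entries (tab_seq w k))"
    using step(3) unfolding evicted_at_def by simp
  show "is_rem (w!k) \<Longrightarrow> evicted_at w (Suc k) \<in> fst (tab_seq w k)"
    using step(4) unfolding evicted_at_def by simp
qed

lemma evicted_at_bounds:
  assumes "1 \<le> t" "t \<le> length w" "is_rem (w!(t - 1))"
  shows "1 \<le> evicted_at w t" "evicted_at w t < t"
proof -
  have tl: "t - 1 < length w" using assms by simp
  have "evicted_at w t \<in> entries (tab_seq w (t - 1))"
    using entries_tab_seq_Suc(2)[OF tl] assms unfolding entries_def by simp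
  then have "evicted_at w t \<in> {1..t - 1}" using tab_seq_invariants(3)[OF less_imp_le[OF tl]] by blast
  then show "1 \<le> evicted_at w t" "evicted_at w t < t" by auto
qed

lemma entries_tab_seq:
  assumes "k \<le> length w"
  shows "x \<in> entries (tab_seq w k) \<longleftrightarrow>
    1 \<le> x \<and> x \<le> k \<and> is_add (w!(x - 1)) \<and> \<not> (\<exists>t. 1 \<le> t \<and> t \<le> k \<and> is_rem (w!(t - 1)) \<and> evicted_at w t = x)"
  using assms
proof (induction k)
  case (Suc k)
  then have k: "k < length w" by simp
  have earlier: "(\<exists>t. 1 \<le> t \<and> t \<le> Suc k \<and> is_rem (w!(t - 1)) \<and> evicted_at w t = x) \<longleftrightarrow>
      (\<exists>t. 1 \<le> t \<and> t \<le> k \<and> is_rem (w!(t - 1)) \<and> evicted_at w t = x) \<or> (is_rem (w!k) \<and> evicted_at w (Suc k) = x)"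
    by (auto simp: le_Suc_eq)
  have fresh: "\<not> (1 \<le> t \<and> t \<le> k \<and> is_rem (w!(t - 1)) \<and> evicted_at w t = Suc k)" for t
    using evicted_at_bounds[of t] k by auto
  show ?case
    unfolding entries_tab_seq_Suc(1)[OF k] earlier using Suc.IH[OF less_imp_le[OF k]] fresh not_is_add_and_is_rem[of "w!k"]
    by (auto simp: le_Suc_eq)
qed (simp add: entries_def)

lemma arcs_of_memD:
  assumes "(x, t) \<in> arcs_of w"
  shows "1 \<le> x" "x < t" "t \<le> length w" "is_rem (w!(t - 1))" "is_add (w!(x - 1))" "x = evicted_at w t"
proof -
  have t: "1 \<le> t" "t \<le> length w" "is_rem (w!(t - 1))" "x = evicted_at w t"
    using assms unfolding arcs_of_def by auto
  then have tl: "t - 1 < length w" by simp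
  then have "x \<in> entries (tab_seq w (t - 1))"
    using entries_tab_seq_Suc(2)[OF tl] t unfolding entries_def by simp
  then show "1 \<le> x" "x < t" "is_add (w!(x - 1))" using t entries_tab_seq[OF less_imp_le[OF tl], of x] by auto
  show "t \<le> length w" "is_rem (w!(t - 1))" "x = evicted_at w t" using t by auto
qed

lemma arcs_of_left_unique:
  assumes "(x, t) \<in> arcs_of w" "(x, t') \<in> arcs_of w"
  shows "t = t'"
proof -
  have "False" if "(x, t) \<in> arcs_of w" "(x, t') \<in> arcs_of w" "t < t'" for t t'
  proof -
    note a = arcs_of_memD[OF that(1)] and b = arcs_of_memD[OF that(2)]
    have tl: "t' - 1 < length w" using b by simp
    have "x \<in> entries (tab_seq w (t' - 1))"
      using entries_tab_seq_Suc(2)[OF tl] b unfolding entries_def by simp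
    then show False using entries_tab_seq[OF less_imp_le[OF tl], of x] a b that(3) by auto
  qed
  then show ?thesis using assms by (metis linorder_neqE_nat)
qed

lemma tab_seq_length: "tab_seq w (length w) = ({}, {})"
proof -
  note I = tab_seq_invariants[OF order.refl]
  have "fold move w (0, 0) = (0, 0)" using walk unfolding walk_to_empty_iff by simp
  then have "card (fst (tab_seq w (length w))) = 0" "card (snd (tab_seq w (length w))) = 0"
    using I(2) unfolding shape_def by auto
  then show ?thesis using standard_tableauD(1,2)[OF I(1)] by (metis card_0_eq prod.collapse)
qed

lemma arcs_of_partner:
  assumes "1 \<le> x" "x \<le> length w" "is_add (w!(x - 1))"
  shows "\<exists>t. (x, t) \<in> arcs_of w"
proof -
  have "x \<notin> entries (tab_seq w (length w))" using tab_seq_length unfolding entries_def by simp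
  then show ?thesis using entries_tab_seq[OF order.refl, of x] assms unfolding arcs_of_def by blast
qed

lemma entries_tab_seq_eq_open_arcs:
  assumes k: "k \<le> length w"
  shows "entries (tab_seq w k) = open_arcs (arcs_of w) k"
proof (intro set_eqI iffI)
  fix x assume "x \<in> entries (tab_seq w k)"
  then have X: "1 \<le> x" "x \<le> k" "is_add (w!(x - 1))"
    "\<not> (\<exists>t. 1 \<le> t \<and> t \<le> k \<and> is_rem (w!(t - 1)) \<and> evicted_at w t = x)"
    using entries_tab_seq[OF k] by auto
  obtain t where t: "(x, t) \<in> arcs_of w" using arcs_of_partner X k by fastforce
  then have "k < t" using arcs_of_memD[OF t] X(4) by auto
  then show "x \<in> open_arcs (arcs_of w) k" using t X unfolding open_arcs_def by auto
next
  fix x assume "x \<in> open_arcs (arcs_of w) k"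
  then obtain j where j: "(x, j) \<in> arcs_of w" "x \<le> k" "k < j" unfolding open_arcs_def by auto
  have "t = j" if "1 \<le> t" "t \<le> k" "is_rem (w!(t - 1))" "evicted_at w t = x" for t
    using that k arcs_of_left_unique[OF _ j(1), of t] unfolding arcs_of_def by fastforce
  then show "x \<in> entries (tab_seq w k)"
    using entries_tab_seq[OF k] arcs_of_memD[OF j(1)] j by auto
qed

end

section \<open>From arc sets back to walks\<close>

definition undo_step :: "(nat \<times> nat) set \<Rightarrow> nat \<Rightarrow> tableau \<Rightarrow> tableau option" where
  "undo_step A t S = (if \<exists>x. (x, t) \<in> A then row_insert (THE x. (x, t) \<in> A) S
     else if \<exists>j. (t, j) \<in> A then Some (if t \<in> fst S then (fst S - {t}, snd S) else (fst S, snd S - {t}))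
     else Some S)"

definition step_at :: "(nat \<times> nat) set \<Rightarrow> nat \<Rightarrow> tableau \<Rightarrow> step" where
  "step_at A t S = (if \<exists>x. (x, t) \<in> A then (if \<forall>z\<in>fst S. z < (THE x. (x, t) \<in> A) then Rem1 else Rem2)
     else if \<exists>j. (t, j) \<in> A then (if t \<in> fst S then Add1 else Add2) else Stay)"

lemma undo_step_keeps_other_entries:
  assumes nx: "\<not> (\<exists>x. (x, t) \<in> A)" and undo: "undo_step A t S = Some S'"
  shows "fst S - {t} \<subseteq> fst S'" "snd S - {t} \<subseteq> snd S'"
proof -
  have "S' = (if \<exists>j. (t, j) \<in> A then (if t \<in> fst S then (fst S - {t}, snd S) else (fst S, snd S - {t})) else S)"
    using undo nx unfolding undo_step_def by (auto split: if_splits)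
  then show "fst S - {t} \<subseteq> fst S'" "snd S - {t} \<subseteq> snd S'" by (auto split: if_splits)
qed

function rev_tab :: "(nat \<times> nat) set \<Rightarrow> nat \<Rightarrow> nat \<Rightarrow> tableau option" where
  "rev_tab A n t = (if n \<le> t then Some ({}, {}) else Option.bind (rev_tab A n (Suc t)) (undo_step A (Suc t)))"
  by auto
termination by (relation "measure (\<lambda>(A, n, t). n - t)") auto

declare rev_tab.simps[simp del]

lemma rev_tab_top: "rev_tab A n n = Some ({}, {})"
  by (simp add: rev_tab.simps)

lemma rev_tab_step: "t < n \<Longrightarrow> rev_tab A n t = Option.bind (rev_tab A n (Suc t)) (undo_step A (Suc t))"
  by (subst rev_tab.simps) simp

definition walk_of :: "(nat \<times> nat) set \<Rightarrow> nat \<Rightarrow> step list" where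
  "walk_of A n = map (\<lambda>t. step_at A t (the (rev_tab A n t))) [1..<Suc n]"

lemma length_walk_of: "length (walk_of A n) = n"
  unfolding walk_of_def by simp

lemma nth_walk_of: "i < n \<Longrightarrow> walk_of A n ! i = step_at A (Suc i) (the (rev_tab A n (Suc i)))"
  unfolding walk_of_def by (simp add: nth_map_upt del: upt_Suc)

context
  fixes w :: "step list"
  assumes walk: "walk_to_empty (0, 0) w"
begin

lemma arcs_of_ends:
  assumes k: "k < length w"
  shows "(\<exists>x. (x, Suc k) \<in> arcs_of w) \<longleftrightarrow> is_rem (w!k)"
    "is_rem (w!k) \<Longrightarrow> (THE x. (x, Suc k) \<in> arcs_of w) = evicted_at w (Suc k)"
    "(\<exists>j. (Suc k, j) \<in> arcs_of w) \<longleftrightarrow> is_add (w!k)"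
proof -
  have mem: "is_rem (w!k) \<Longrightarrow> (evicted_at w (Suc k), Suc k) \<in> arcs_of w"
    unfolding arcs_of_def using k by auto
  show "(\<exists>x. (x, Suc k) \<in> arcs_of w) \<longleftrightarrow> is_rem (w!k)"
    using mem arcs_of_memD(4)[OF walk] by fastforce
  show "is_rem (w!k) \<Longrightarrow> (THE x. (x, Suc k) \<in> arcs_of w) = evicted_at w (Suc k)"
    using mem arcs_of_memD(6)[OF walk] by blast
  show "(\<exists>j. (Suc k, j) \<in> arcs_of w) \<longleftrightarrow> is_add (w!k)"
    using arcs_of_memD(5)[OF walk] arcs_of_partner[OF walk, of "Suc k"] k by fastforce
qed

lemma undo_step_tab_seq:
  assumes k: "k < length w"
  shows "undo_step (arcs_of w) (Suc k) (tab_seq w (Suc k)) = Some (tab_seq w k)"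
    "step_at (arcs_of w) (Suc k) (tab_seq w (Suc k)) = w!k"
proof -
  define S where "S = tab_seq w k"
  note I = tab_seq_invariants[OF walk less_imp_le[OF k], folded S_def]
  have al: "allowed (w!k) (shape S)" using allowed_tab_seq[OF walk k] I(2) by simp
  have P: "tab_seq w (Suc k) = tab_step (Suc k) (w!k) S" unfolding S_def by simp
  have ev: "evicted_at w (Suc k) = evicted (w!k) S" unfolding evicted_at_def S_def by simp
  have fresh: "Suc k \<notin> fst S" "Suc k \<notin> snd S" using I(3) unfolding entries_def by auto
  note ends = arcs_of_ends[OF k]
  have "undo_step (arcs_of w) (Suc k) (tab_step (Suc k) (w!k) S) = Some S \<and>
      step_at (arcs_of w) (Suc k) (tab_step (Suc k) (w!k) S) = w!k"
  proof (cases "w!k")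
    case Rem1
    then show ?thesis using ends(1,2) ev row_insert_undoes_Rem1[OF I(1)] al
      unfolding undo_step_def step_at_def by (simp add: is_rem_def)
  next
    case Rem2
    then show ?thesis using ends(1,2) ev row_insert_undoes_Rem2[OF I(1)] al
      unfolding undo_step_def step_at_def by (simp add: is_rem_def)
  qed (use ends(1,3) fresh in \<open>auto simp: undo_step_def step_at_def is_rem_def is_add_def insert_absorb\<close>)
  then show "undo_step (arcs_of w) (Suc k) (tab_seq w (Suc k)) = Some (tab_seq w k)"
    "step_at (arcs_of w) (Suc k) (tab_seq w (Suc k)) = w!k" unfolding P S_def by auto
qed

lemma rev_tab_arcs_of: "t \<le> length w \<Longrightarrow> rev_tab (arcs_of w) (length w) t = Some (tab_seq w t)"
proof (induction t rule: inc_induct)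
  case base
  show ?case using rev_tab_top tab_seq_length[OF walk] by simp
next
  case (step t)
  then show ?case using rev_tab_step[OF step.hyps(2)] undo_step_tab_seq(1)[OF step.hyps(2)] by simp
qed

lemma walk_of_arcs_of: "walk_of (arcs_of w) (length w) = w"
proof (rule nth_equalityI)
  fix i assume "i < length (walk_of (arcs_of w) (length w))"
  then have i: "i < length w" by (simp add: length_walk_of)
  then show "walk_of (arcs_of w) (length w) ! i = w ! i"
    using nth_walk_of[OF i] rev_tab_arcs_of[of "Suc i"] undo_step_tab_seq(2)[OF i] by simp
qed (simp add: length_walk_of)

end

definition vertex_disjoint :: "(nat \<times> nat) set \<Rightarrow> bool" where
  "vertex_disjoint A \<longleftrightarrow> (\<forall>v. \<forall>a\<in>A. \<forall>b\<in>A. in_arc v a \<and> in_arc v b \<longrightarrow> a = b)"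

definition no_3_crossing :: "(nat \<times> nat) set \<Rightarrow> bool" where
  "no_3_crossing A \<longleftrightarrow> \<not> (\<exists>i1 j1 i2 j2 i3 j3. (i1, j1) \<in> A \<and> (i2, j2) \<in> A \<and> (i3, j3) \<in> A \<and>
     i1 < i2 \<and> i2 < i3 \<and> i3 < j1 \<and> j1 < j2 \<and> j2 < j3)"

lemma three_noncrossing_iff:
  "three_noncrossing n A \<longleftrightarrow> digraph_on n A \<and> vertex_disjoint A \<and> no_3_crossing A"
  unfolding three_noncrossing_def vertex_disjoint_def no_3_crossing_def by blast

text \<open>Every entry \<open>y\<close> of row 2 starts an arc \<open>(y, j)\<close> that is crossed from the left by an arc
  \<open>(b, j')\<close> with \<open>t < j'\<close>, where \<open>b\<close> is at least every entry of row 1 below \<open>y\<close>. This is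
  what excludes a failing row insertion at a later right end.\<close>
definition row2_crossings :: "(nat \<times> nat) set \<Rightarrow> nat \<Rightarrow> tableau \<Rightarrow> bool" where
  "row2_crossings A t S \<longleftrightarrow> (\<forall>y\<in>snd S. \<exists>j b j'. (y, j) \<in> A \<and> (b, j') \<in> A \<and> t < j' \<and> j' < j \<and> b < y \<and>
     (\<forall>z\<in>fst S. z < y \<longrightarrow> z \<le> b))"

lemma row2_crossings_mono:
  assumes "row2_crossings A t S" "fst S' \<subseteq> fst S" "snd S' \<subseteq> snd S" "t' \<le> t"
  shows "row2_crossings A t' S'"
  using assms unfolding row2_crossings_def by (meson le_less_trans subsetD)

lemma row2_crossings_keep:
  assumes I: "row2_crossings A u S" and xu: "(x, u) \<in> A" "0 < u" and y2: "y2 \<in> snd S"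
    and sub: "R \<subseteq> insert x (fst S)" and below: "\<forall>z\<in>fst S. z < y2 \<longrightarrow> z < x"
  shows "\<exists>j b j'. (y2, j) \<in> A \<and> (b, j') \<in> A \<and> u - 1 < j' \<and> j' < j \<and> b < y2 \<and> (\<forall>z\<in>R. z < y2 \<longrightarrow> z \<le> b)"
proof -
  have "\<exists>j b j'. (y2, j) \<in> A \<and> (b, j') \<in> A \<and> u < j' \<and> j' < j \<and> b < y2 \<and> (\<forall>z\<in>fst S. z < y2 \<longrightarrow> z \<le> b)"
    using I y2 unfolding row2_crossings_def by (rule bspec)
  then obtain j b j' where W: "(y2, j) \<in> A" "(b, j') \<in> A" "u < j'" "j' < j" "b < y2"
    "\<forall>z\<in>fst S. z < y2 \<longrightarrow> z \<le> b" by blast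
  show ?thesis
  proof (cases "x < y2")
    case True
    have "\<forall>z\<in>R. z < y2 \<longrightarrow> z \<le> x" using sub below by (metis insertE less_imp_le order.refl subsetD)
    then show ?thesis using W True xu by (intro exI[of _ j] exI[of _ x] exI[of _ u]) auto
  next
    case False
    then show ?thesis using W sub by (intro exI[of _ j] exI[of _ b] exI[of _ j']) auto
  qed
qed

lemma row2_crossings_row_insert:
  assumes I: "row2_crossings A u S" and xu: "(x, u) \<in> A" and u: "0 < u" and fin: "finite (fst S)"
    and xn: "x \<notin> entries S" and ins: "row_insert x S = Some S'"
    and partner: "\<And>y. y \<in> fst S \<Longrightarrow> \<exists>j. (y, j) \<in> A \<and> u < j"
  shows "row2_crossings A (u - 1) S'"
  unfolding row2_crossings_def
proof
  fix y2 assume y2: "y2 \<in> snd S'"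
  from ins show "\<exists>j b j'. (y2, j) \<in> A \<and> (b, j') \<in> A \<and> u - 1 < j' \<and> j' < j \<and> b < y2 \<and> (\<forall>z\<in>fst S'. z < y2 \<longrightarrow> z \<le> b)"
  proof (cases rule: row_insert_cases)
    case append
    then have "y2 \<in> snd S" using y2 by simp
    then show ?thesis using row2_crossings_keep[OF I xu u _, of y2 "fst S'"] append by simp
  next
    case bump
    define y where "y = Min {z\<in>fst S. x < z}"
    have ne: "{z\<in>fst S. x < z} \<noteq> {}" using bump(1) xn unfolding entries_def by (auto simp: not_less le_less)
    have y: "y \<in> fst S" "x < y" using Min_in[OF _ ne] fin unfolding y_def by auto
    have ymin: "y \<le> z" if "z \<in> fst S" "x < z" for z using fin that unfolding y_def by simp
    have below: "z < x" if "z \<in> fst S" "z < y" for z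
    proof -
      have "\<not> x < z" using ymin[of z] that by auto
      moreover have "z \<noteq> x" using that xn unfolding entries_def by auto
      ultimately show ?thesis by simp
    qed
    show ?thesis
    proof (cases "y2 = y")
      case True
      obtain j where j: "(y, j) \<in> A" "u < j" using partner y by blast
      have "\<forall>z\<in>fst S'. z < y2 \<longrightarrow> z \<le> x"
        using bump(3) below True unfolding y_def[symmetric] by (auto intro: less_imp_le)
      then show ?thesis using j True y(2) xu u by (intro exI[of _ j] exI[of _ x] exI[of _ u]) auto
    next
      case False
      then have old: "y2 \<in> snd S" "y2 < y" using y2 bump(2,3) unfolding y_def[symmetric] by auto
      have "fst S' \<subseteq> insert x (fst S)" using bump(3) by auto
      moreover have "\<forall>z\<in>fst S. z < y2 \<longrightarrow> z < x" using below old(2) by auto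
      ultimately show ?thesis using row2_crossings_keep[OF I xu u old(1)] by blast
    qed
  qed
qed

definition rev_invariant :: "(nat \<times> nat) set \<Rightarrow> nat \<Rightarrow> tableau \<Rightarrow> bool" where
  "rev_invariant A t S \<longleftrightarrow> standard_tableau S \<and> entries S = open_arcs A t \<and> row2_crossings A t S"

text \<open>\<open>S'\<close> is the tableau before step \<open>t + 1\<close>, and \<open>step_at A (Suc t) S\<close> replays that step.\<close>
definition undoes :: "(nat \<times> nat) set \<Rightarrow> nat \<Rightarrow> tableau \<Rightarrow> tableau \<Rightarrow> bool" where
  "undoes A t S S' \<longleftrightarrow> undo_step A (Suc t) S = Some S' \<and> rev_invariant A t S' \<and>
     allowed (step_at A (Suc t) S) (shape S') \<and> tab_step (Suc t) (step_at A (Suc t) S) S' = S \<and>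
     move (step_at A (Suc t) S) (shape S') = shape S"

locale noncrossing_arcs =
  fixes A :: "(nat \<times> nat) set" and n :: nat
  assumes arc_range: "(i, j) \<in> A \<Longrightarrow> 1 \<le> i \<and> i < j \<and> j \<le> n"
    and disjoint: "vertex_disjoint A"
    and noncrossing: "no_3_crossing A"
begin

lemma same_right_end: "(x, t) \<in> A \<Longrightarrow> (x', t) \<in> A \<Longrightarrow> x = x'"
  using disjoint unfolding vertex_disjoint_def in_arc_def by force

lemma same_left_end: "(x, j) \<in> A \<Longrightarrow> (x, j') \<in> A \<Longrightarrow> j = j'"
  using disjoint unfolding vertex_disjoint_def in_arc_def by force

lemma right_end_not_left_end: "(x, t) \<in> A \<Longrightarrow> (t, j) \<in> A \<Longrightarrow> False"
  using disjoint arc_range unfolding vertex_disjoint_def in_arc_def by (metis fst_conv less_irrefl snd_conv)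

lemma THE_right_end: "(x, t) \<in> A \<Longrightarrow> (THE x. (x, t) \<in> A) = x"
  using same_right_end by blast

lemma open_arcs_Suc: "open_arcs A t = open_arcs A (Suc t) - {Suc t} \<union> {x. (x, Suc t) \<in> A}"
proof (intro set_eqI iffI)
  fix x assume "x \<in> open_arcs A t"
  then obtain j where "(x, j) \<in> A" "x \<le> t" "t < j" unfolding open_arcs_def by blast
  then show "x \<in> open_arcs A (Suc t) - {Suc t} \<union> {x. (x, Suc t) \<in> A}"
    unfolding open_arcs_def by (cases "j = Suc t") auto
next
  fix x assume "x \<in> open_arcs A (Suc t) - {Suc t} \<union> {x. (x, Suc t) \<in> A}"
  then show "x \<in> open_arcs A t" using arc_range[of x "Suc t"] unfolding open_arcs_def by auto
qed

lemma not_open_at_right_end: "(x, Suc t) \<in> A \<Longrightarrow> x \<notin> open_arcs A (Suc t) \<and> Suc t \<notin> open_arcs A (Suc t)"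
  using same_left_end right_end_not_left_end unfolding open_arcs_def by fastforce

lemma row_insert_not_None:
  assumes inv: "rev_invariant A (Suc t) S" and xu: "(x, Suc t) \<in> A"
  shows "row_insert x S \<noteq> None"
proof
  assume none: "row_insert x S = None"
  have ok: "standard_tableau S" and E: "entries S = open_arcs A (Suc t)" and I: "row2_crossings A (Suc t) S"
    using inv unfolding rev_invariant_def by auto
  have fin: "finite (fst S)" using standard_tableauD(1)[OF ok] .
  have xn: "x \<notin> fst S" using E not_open_at_right_end[OF xu] unfolding entries_def by auto
  define y where "y = Min {z\<in>fst S. x < z}"
  have nall: "\<not> (\<forall>z\<in>fst S. z < x)" and "\<not> (\<forall>z\<in>snd S. z < y)"
    using none unfolding row_insert_def Let_def y_def[symmetric] by (auto split: if_splits)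
  then obtain q where q: "q \<in> snd S" "\<not> q < y" by blast
  have ne: "{z\<in>fst S. x < z} \<noteq> {}" using nall xn by (auto simp: not_less le_less)
  have y: "y \<in> fst S" "x < y" using Min_in[OF _ ne] fin unfolding y_def by auto
  then have "y < q" using q standard_tableauD(3)[OF ok] by (auto simp: not_less le_less)
  obtain j b j' where W: "(q, j) \<in> A" "(b, j') \<in> A" "Suc t < j'" "j' < j" "b < q" "\<forall>z\<in>fst S. z < q \<longrightarrow> z \<le> b"
    using I q(1) unfolding row2_crossings_def by blast
  have "q \<in> open_arcs A (Suc t)" using E q(1) unfolding entries_def by auto
  then have "q < Suc t" using not_open_at_right_end[OF xu] unfolding open_arcs_def by (auto simp: le_less)
  moreover have "y \<le> b" using W(6) y(1) \<open>y < q\<close> by blast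
  ultimately have "(x, Suc t) \<in> A \<and> (b, j') \<in> A \<and> (q, j) \<in> A \<and> x < b \<and> b < q \<and> q < Suc t \<and> Suc t < j' \<and> j' < j"
    using xu W(1-5) y(2) by simp
  then show False using noncrossing unfolding no_3_crossing_def by blast
qed

lemma undo_right_end:
  assumes inv: "rev_invariant A (Suc t) S" and xu: "(x, Suc t) \<in> A"
  obtains S' where "undoes A t S S'" "is_rem (step_at A (Suc t) S)" "evicted (step_at A (Suc t) S) S' = x"
proof -
  have ok: "standard_tableau S" and E: "entries S = open_arcs A (Suc t)" and I: "row2_crossings A (Suc t) S"
    using inv unfolding rev_invariant_def by auto
  have xn: "x \<notin> entries S" using E not_open_at_right_end[OF xu] by simp
  obtain S' where ins: "row_insert x S = Some S'" using row_insert_not_None[OF inv xu] by blast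
  define s where "s = (if \<forall>z\<in>fst S. z < x then Rem1 else Rem2)"
  have ex: "\<exists>x. (x, Suc t) \<in> A" using xu by blast
  have step: "step_at A (Suc t) S = s" "undo_step A (Suc t) S = Some S'"
    using ex ins unfolding step_at_def undo_step_def s_def THE_right_end[OF xu] by simp_all
  note R = row_insert_SomeD[OF ok xn ins s_def]
  have "{x'. (x', Suc t) \<in> A} = {x}" using same_right_end[OF xu] xu by blast
  then have "open_arcs A t = insert x (open_arcs A (Suc t))"
    using open_arcs_Suc[of t] not_open_at_right_end[OF xu] by auto
  then have "entries S' = open_arcs A t" using R(2) E by simp
  moreover have "row2_crossings A t S'"
  proof -
    have "\<exists>j. (y, j) \<in> A \<and> Suc t < j" if "y \<in> fst S" for y
      using that E unfolding entries_def open_arcs_def by blast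
    then show ?thesis using row2_crossings_row_insert[OF I xu _ standard_tableauD(1)[OF ok] xn ins] by simp
  qed
  ultimately have "undoes A t S S'" using R step unfolding undoes_def rev_invariant_def by simp
  moreover have "is_rem s" unfolding s_def is_rem_def by simp
  ultimately show ?thesis using that R(5) step(1) by simp
qed

lemma undo_left_end:
  assumes inv: "rev_invariant A (Suc t) S" and uj: "(Suc t, j) \<in> A"
  obtains S' where "undoes A t S S'" "\<not> is_rem (step_at A (Suc t) S)"
proof -
  have ok: "standard_tableau S" and E: "entries S = open_arcs A (Suc t)" and I: "row2_crossings A (Suc t) S"
    using inv unfolding rev_invariant_def by auto
  have nx: "\<not> (\<exists>x. (x, Suc t) \<in> A)" using right_end_not_left_end uj by blast
  have mem: "Suc t \<in> entries S" and le: "\<forall>z\<in>entries S. z \<le> Suc t"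
    using E uj arc_range[OF uj] unfolding open_arcs_def by auto
  define S' where "S' = (if Suc t \<in> fst S then (fst S - {Suc t}, snd S) else (fst S, snd S - {Suc t}))"
  define s where "s = (if Suc t \<in> fst S then Add1 else Add2)"
  have step: "step_at A (Suc t) S = s" "undo_step A (Suc t) S = Some S'"
    using nx uj unfolding step_at_def undo_step_def s_def S'_def by auto
  note D = delete_max_entry[OF ok mem le S'_def s_def]
  have "entries S' = open_arcs A t" using D(2) E open_arcs_Suc[of t] nx by simp
  moreover have "row2_crossings A t S'" using I unfolding S'_def
    by (rule row2_crossings_mono) (auto split: if_splits)
  ultimately have "undoes A t S S'" using D step unfolding undoes_def rev_invariant_def by simp
  then show ?thesis using that step(1) unfolding s_def is_rem_def by simp
qed

lemma undo_unmatched: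
  assumes inv: "rev_invariant A (Suc t) S" and nx: "\<not> (\<exists>x. (x, Suc t) \<in> A)" and nj: "\<not> (\<exists>j. (Suc t, j) \<in> A)"
  shows "undoes A t S S" "step_at A (Suc t) S = Stay"
proof -
  have "open_arcs A t = open_arcs A (Suc t)" using open_arcs_Suc[of t] nx nj unfolding open_arcs_def by auto
  moreover have "row2_crossings A t S" using inv unfolding rev_invariant_def
    by (auto intro: row2_crossings_mono)
  ultimately show "undoes A t S S" "step_at A (Suc t) S = Stay"
    using inv nx nj unfolding undoes_def rev_invariant_def undo_step_def step_at_def by auto
qed

lemma undo_step_exists:
  assumes inv: "rev_invariant A (Suc t) S"
  obtains S' where "undoes A t S S'"
    "\<And>x. (x, Suc t) \<in> A \<Longrightarrow> is_rem (step_at A (Suc t) S) \<and> evicted (step_at A (Suc t) S) S' = x"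
    "\<not> (\<exists>x. (x, Suc t) \<in> A) \<Longrightarrow> \<not> is_rem (step_at A (Suc t) S)"
proof (cases "\<exists>x. (x, Suc t) \<in> A")
  case True
  then obtain x where xu: "(x, Suc t) \<in> A" by blast
  obtain S' where S': "undoes A t S S'" "is_rem (step_at A (Suc t) S)" "evicted (step_at A (Suc t) S) S' = x"
    using undo_right_end[OF inv xu] by blast
  show ?thesis using that[OF S'(1)] S'(2,3) same_right_end[OF xu] xu by blast
next
  case nx: False
  show ?thesis
  proof (cases "\<exists>j. (Suc t, j) \<in> A")
    case True
    then obtain j where "(Suc t, j) \<in> A" by blast
    then obtain S' where "undoes A t S S'" "\<not> is_rem (step_at A (Suc t) S)"
      using undo_left_end[OF inv] by blast
    then show ?thesis using that nx by blast
  next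
    case False
    then show ?thesis using that undo_unmatched[OF inv nx] nx by (simp add: is_rem_def)
  qed
qed

lemma rev_tab_invariant: "t \<le> n \<Longrightarrow> \<exists>S. rev_tab A n t = Some S \<and> rev_invariant A t S"
proof (induction t rule: inc_induct)
  case base
  have "open_arcs A n = {}" using arc_range unfolding open_arcs_def by fastforce
  then show ?case using rev_tab_top
    unfolding rev_invariant_def standard_tableau_def entries_def row2_crossings_def by auto
next
  case (step t)
  then obtain S where S: "rev_tab A n (Suc t) = Some S" "rev_invariant A (Suc t) S" by blast
  obtain S' where "undoes A t S S'" using undo_step_exists[OF S(2)] by blast
  then show ?case using rev_tab_step[OF step.hyps(2)] S(1) unfolding undoes_def by auto
qed


definition tab :: "nat \<Rightarrow> tableau" where
  "tab t = the (rev_tab A n t)"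

lemma tab_invariant: "t \<le> n \<Longrightarrow> rev_tab A n t = Some (tab t) \<and> rev_invariant A t (tab t)"
  using rev_tab_invariant unfolding tab_def by fastforce

lemma tab_Suc:
  assumes t: "t < n"
  shows "undoes A t (tab (Suc t)) (tab t)"
    "(x, Suc t) \<in> A \<Longrightarrow> is_rem (step_at A (Suc t) (tab (Suc t))) \<and> evicted (step_at A (Suc t) (tab (Suc t))) (tab t) = x"
    "\<not> (\<exists>x. (x, Suc t) \<in> A) \<Longrightarrow> \<not> is_rem (step_at A (Suc t) (tab (Suc t)))"
proof -
  have inv: "rev_tab A n (Suc t) = Some (tab (Suc t))" "rev_invariant A (Suc t) (tab (Suc t))"
    using tab_invariant[of "Suc t"] t by auto
  obtain S' where S': "undoes A t (tab (Suc t)) S'"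
    "\<And>x. (x, Suc t) \<in> A \<Longrightarrow> is_rem (step_at A (Suc t) (tab (Suc t))) \<and> evicted (step_at A (Suc t) (tab (Suc t))) S' = x"
    "\<not> (\<exists>x. (x, Suc t) \<in> A) \<Longrightarrow> \<not> is_rem (step_at A (Suc t) (tab (Suc t)))"
    using undo_step_exists[OF inv(2)] by blast
  have "S' = tab t" using S'(1) rev_tab_step[OF t] inv(1) tab_invariant[of t] t unfolding undoes_def by simp
  then show "undoes A t (tab (Suc t)) (tab t)"
    "(x, Suc t) \<in> A \<Longrightarrow> is_rem (step_at A (Suc t) (tab (Suc t))) \<and> evicted (step_at A (Suc t) (tab (Suc t))) (tab t) = x"
    "\<not> (\<exists>x. (x, Suc t) \<in> A) \<Longrightarrow> \<not> is_rem (step_at A (Suc t) (tab (Suc t)))"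
    using S' by auto
qed

lemma tab_0: "tab 0 = ({}, {})"
proof -
  have "entries (tab 0) = open_arcs A 0" using tab_invariant[of 0] unfolding rev_invariant_def by simp
  also have "\<dots> = {}" using arc_range unfolding open_arcs_def by fastforce
  finally show ?thesis unfolding entries_def by (metis Un_empty prod.collapse)
qed

lemma tab_n: "tab n = ({}, {})"
  unfolding tab_def using rev_tab_top by simp

lemma nth_walk_of_tab: "t < n \<Longrightarrow> walk_of A n ! t = step_at A (Suc t) (tab (Suc t))"
  using nth_walk_of unfolding tab_def by simp

lemma tab_seq_walk_of: "t \<le> n \<Longrightarrow> tab_seq (walk_of A n) t = tab t"
proof (induction t)
  case (Suc t)
  then show ?case using tab_Suc(1)[of t] nth_walk_of_tab[of t] unfolding undoes_def by simp
qed (simp add: tab_0)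

lemma fold_move_walk_of: "t \<le> n \<Longrightarrow> fold move (take t (walk_of A n)) (0, 0) = shape (tab t)"
proof (induction t)
  case (Suc t)
  then show ?case using fold_move_take_Suc[of t "walk_of A n"] tab_Suc(1)[of t] nth_walk_of_tab[of t]
    unfolding undoes_def length_walk_of by simp
qed (simp add: tab_0 shape_def)

lemma walk_to_empty_walk_of: "walk_to_empty (0, 0) (walk_of A n)"
  unfolding walk_to_empty_iff length_walk_of
proof (intro conjI allI impI)
  fix k assume "k < n"
  then show "allowed (walk_of A n ! k) (fold move (take k (walk_of A n)) (0, 0))"
    using fold_move_walk_of[of k] tab_Suc(1)[of k] nth_walk_of_tab[of k] unfolding undoes_def by simp
next
  show "fold move (walk_of A n) (0, 0) = (0, 0)"
    using fold_move_walk_of[of n] tab_n by (simp add: length_walk_of shape_def)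
qed

lemma arcs_of_walk_of: "arcs_of (walk_of A n) = A"
proof (intro set_eqI iffI)
  fix p assume "p \<in> arcs_of (walk_of A n)"
  then obtain u where u: "p = (evicted_at (walk_of A n) u, u)" "1 \<le> u" "u \<le> n" "is_rem (walk_of A n ! (u - 1))"
    unfolding arcs_of_def length_walk_of by blast
  then obtain t where "u = Suc t" by (cases u) auto
  then have t: "p = (evicted_at (walk_of A n) (Suc t), Suc t)" "t < n" "is_rem (walk_of A n ! t)"
    using u by auto
  then have "\<exists>x. (x, Suc t) \<in> A" using tab_Suc(3)[of t] nth_walk_of_tab[of t] by auto
  then obtain x where "(x, Suc t) \<in> A" by blast
  then show "p \<in> A"
    using t tab_Suc(2)[of t x] nth_walk_of_tab[of t] tab_seq_walk_of[of t]
    unfolding evicted_at_def by simp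
next
  fix p assume p: "p \<in> A"
  obtain x j where xj: "p = (x, j)" by (cases p)
  then have "x < j" "j \<le> n" using arc_range p by auto
  then obtain t where "j = Suc t" "t < n" by (cases j) auto
  then have xt: "p = (x, Suc t)" "t < n" using xj by auto
  have "is_rem (walk_of A n ! t)" "evicted_at (walk_of A n) (Suc t) = x"
    using p xt tab_Suc(2)[of t x] nth_walk_of_tab[of t] tab_seq_walk_of[of t]
    unfolding evicted_at_def by simp_all
  then show "p \<in> arcs_of (walk_of A n)" unfolding arcs_of_def length_walk_of using xt by force
qed

end

definition pair_between :: "nat \<Rightarrow> nat \<Rightarrow> tableau \<Rightarrow> bool" where
  "pair_between lo hi S \<longleftrightarrow> (\<exists>p\<in>fst S. \<exists>q\<in>snd S. lo < p \<and> p < q \<and> q \<le> hi)"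

lemma row_insert_below_pair:
  assumes "finite (fst S)" "p \<in> fst S" "q \<in> snd S" "x < p" "p < q"
  shows "row_insert x S = None"
proof -
  have "Min {z\<in>fst S. x < z} \<le> p" using assms by (intro Min_le) auto
  then have "\<not> q < Min {z\<in>fst S. x < z}" using assms(5) by simp
  then have "\<not> (\<forall>z\<in>snd S. z < Min {z\<in>fst S. x < z})" using assms(3) by blast
  moreover have "\<not> (\<forall>z\<in>fst S. z < x)" using assms(2,4) less_asym by blast
  ultimately show ?thesis unfolding row_insert_def Let_def by auto
qed

lemma row_insert_keeps_smaller:
  assumes ins: "row_insert x S = Some S'" and fin: "finite (fst S)" and xn: "x \<notin> fst S"
    and p: "p \<in> fst S" "p < x" and q: "q \<in> snd S"
  shows "p \<in> fst S' \<and> q \<in> snd S'"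
  using ins
proof (cases rule: row_insert_cases)
  case bump
  have ne: "{z\<in>fst S. x < z} \<noteq> {}" using bump(1) xn by (auto simp: not_less le_less)
  then have "x < Min {z\<in>fst S. x < z}" using Min_in[OF _ ne] fin by auto
  then show ?thesis using bump(3) p q by auto
qed (use p q in auto)

context
  fixes A :: "(nat \<times> nat) set" and n :: nat and St :: "nat \<Rightarrow> tableau"
  assumes arc_range: "\<And>i j. (i, j) \<in> A \<Longrightarrow> 1 \<le> i \<and> i < j \<and> j \<le> n"
    and disjoint: "vertex_disjoint A"
    and run: "\<And>t. t < n \<Longrightarrow> undo_step A (Suc t) (St (Suc t)) = Some (St t)"
    and standard: "\<And>t. t \<le> n \<Longrightarrow> standard_tableau (St t)"
    and entries_open: "\<And>t. t \<le> n \<Longrightarrow> entries (St t) = open_arcs A t"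
begin

lemma run_row_insert:
  assumes xu: "(x, Suc t) \<in> A"
  shows "row_insert x (St (Suc t)) = Some (St t)" "x \<notin> fst (St (Suc t))"
proof -
  have "(THE x. (x, Suc t) \<in> A) = x"
    using xu disjoint unfolding vertex_disjoint_def in_arc_def by (intro the_equality) force+
  moreover have "\<exists>x. (x, Suc t) \<in> A" using xu by blast
  ultimately have "undo_step A (Suc t) (St (Suc t)) = row_insert x (St (Suc t))"
    unfolding undo_step_def by simp
  moreover have "t < n" using arc_range[OF xu] by simp
  ultimately show "row_insert x (St (Suc t)) = Some (St t)" using run by simp
  show "x \<notin> fst (St (Suc t))"
    using entries_open[of "Suc t"] xu arc_range[OF xu] disjoint
    unfolding entries_def open_arcs_def vertex_disjoint_def in_arc_def by fastforce
qed

lemma pair_after_middle_arc: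
  assumes a2: "(i2, Suc t) \<in> A" and a3: "(i3, j3) \<in> A" and "i2 < i3" "i3 < Suc t" "Suc t < j3"
  shows "\<exists>p\<in>fst (St t). \<exists>q\<in>snd (St t). i2 \<le> p \<and> p < q \<and> q \<le> i3"
proof -
  have t: "Suc t \<le> n" using arc_range[OF a3] assms by simp
  note ins = run_row_insert[OF a2]
  have i3: "i3 \<in> entries (St (Suc t))" using entries_open[OF t] a3 assms unfolding open_arcs_def by auto
  have fin: "finite (fst (St (Suc t)))" using standard_tableauD(1)[OF standard[OF t]] .
  from ins(1) show ?thesis
  proof (cases rule: row_insert_cases)
    case append
    then have "i3 \<in> snd (St (Suc t))" using i3 \<open>i2 < i3\<close> unfolding entries_def by auto
    then show ?thesis using append(2) \<open>i2 < i3\<close> by auto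
  next
    case bump
    define y where "y = Min {z\<in>fst (St (Suc t)). i2 < z}"
    have ne: "{z\<in>fst (St (Suc t)). i2 < z} \<noteq> {}" using bump(1) ins(2) by (auto simp: not_less le_less)
    have y: "y \<in> fst (St (Suc t))" "i2 < y" using Min_in[OF _ ne] fin unfolding y_def by auto
    have S: "St t = (insert i2 (fst (St (Suc t)) - {y}), insert y (snd (St (Suc t))))"
      using bump(3) unfolding y_def .
    show ?thesis
    proof (cases "i3 \<in> fst (St (Suc t))")
      case True
      then have "y \<le> i3" using fin \<open>i2 < i3\<close> unfolding y_def by (intro Min_le) auto
      then show ?thesis using S y by auto
    next
      case False
      then show ?thesis using S i3 \<open>i2 < i3\<close> unfolding entries_def by auto
    qed
  qed
qed

lemma pair_between_persists:
  assumes pair: "pair_between lo hi (St (Suc t))" and hi: "hi < Suc t" and t: "Suc t \<le> n"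
  shows "pair_between lo hi (St t)"
proof -
  obtain p q where pq: "p \<in> fst (St (Suc t))" "q \<in> snd (St (Suc t))" "lo < p" "p < q" "q \<le> hi"
    using pair unfolding pair_between_def by blast
  have fin: "finite (fst (St (Suc t)))" using standard_tableauD(1)[OF standard[OF t]] .
  show ?thesis
  proof (cases "\<exists>x. (x, Suc t) \<in> A")
    case True
    then obtain x where xu: "(x, Suc t) \<in> A" by blast
    note ins = run_row_insert[OF xu]
    have "\<not> x < p" using row_insert_below_pair[OF fin pq(1,2) _ pq(4)] ins(1) by auto
    moreover have "x \<noteq> p" using ins(2) pq(1) by auto
    ultimately have "p < x" by simp
    then show ?thesis using row_insert_keeps_smaller[OF ins(1) fin ins(2) pq(1) _ pq(2)] pq
      unfolding pair_between_def by blast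
  next
    case False
    have "t < n" using t by simp
    then have "p \<in> fst (St t)" "q \<in> snd (St t)"
      using undo_step_keeps_other_entries[OF False run] pq hi by auto
    then show ?thesis using pq unfolding pair_between_def by blast
  qed
qed

text \<open>For a 3-crossing \<open>i1 < i2 < i3 < j1 < j2 < j3\<close>, undoing \<open>j2\<close> creates an entry of row 1
  in \<open>(i1, i3]\<close> below an entry of row 2 in \<open>(i1, i3]\<close>; this pair survives down to \<open>j1\<close>, where
  the row insertion of \<open>i1\<close> then fails.\<close>
lemma no_3_crossing_of_run: "no_3_crossing A"
  unfolding no_3_crossing_def
proof
  assume "\<exists>i1 j1 i2 j2 i3 j3. (i1, j1) \<in> A \<and> (i2, j2) \<in> A \<and> (i3, j3) \<in> A \<and>
     i1 < i2 \<and> i2 < i3 \<and> i3 < j1 \<and> j1 < j2 \<and> j2 < j3"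
  then obtain i1 j1 i2 j2 i3 j3 where C: "(i1, j1) \<in> A" "(i2, j2) \<in> A" "(i3, j3) \<in> A"
    "i1 < i2" "i2 < i3" "i3 < j1" "j1 < j2" "j2 < j3" by blast
  obtain t1 t2 where t: "j1 = Suc t1" "j2 = Suc t2" using C(6,7) by (metis less_imp_Suc_add)
  have n: "j3 \<le> n" using arc_range[OF C(3)] by simp
  obtain p q where pq: "p \<in> fst (St t2)" "q \<in> snd (St t2)" "i2 \<le> p" "p < q" "q \<le> i3"
    using pair_after_middle_arc[of i2 t2 i3 j3] C t by auto
  then have start: "pair_between i1 i3 (St t2)"
    unfolding pair_between_def using C(4) by (meson less_le_trans)
  have "j1 \<le> u \<longrightarrow> pair_between i1 i3 (St u)" if "u \<le> t2" for u
    using that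
  proof (induction u rule: inc_induct)
    case (step u)
    then show ?case using pair_between_persists[of i1 i3 u] C n t by auto
  qed (use start in simp)
  then have "pair_between i1 i3 (St j1)" using C t by simp
  then obtain p q where "p \<in> fst (St j1)" "q \<in> snd (St j1)" "i1 < p" "p < q"
    unfolding pair_between_def by blast
  then have "row_insert i1 (St j1) = None"
    using row_insert_below_pair standard_tableauD(1)[OF standard[of j1]] C n by simp
  then show False using run_row_insert(1)[of i1 t1] C(1) t by simp
qed

end

context
  fixes w :: "step list"
  assumes walk: "walk_to_empty (0, 0) w"
begin

lemma arcs_of_vertex_disjoint: "vertex_disjoint (arcs_of w)"
  unfolding vertex_disjoint_def
proof (intro allI ballI impI)
  fix v a b assume a: "a \<in> arcs_of w" and b: "b \<in> arcs_of w" and ab: "in_arc v a \<and> in_arc v b"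
  obtain x t x' t' where at: "a = (x, t)" and bt: "b = (x', t')" by fastforce
  note A = arcs_of_memD[OF walk a[unfolded at]] and B = arcs_of_memD[OF walk b[unfolded bt]]
  consider "v = x" "v = x'" | "v = x" "v = t'" | "v = t" "v = x'" | "v = t" "v = t'"
    using ab at bt unfolding in_arc_def by auto
  then show "a = b"
  proof cases
    case 1 then show ?thesis using arcs_of_left_unique[OF walk] a b at bt by auto
  next
    case 2 then show ?thesis using A(5) B(4) not_is_add_and_is_rem by metis
  next
    case 3 then show ?thesis using A(4) B(5) not_is_add_and_is_rem by metis
  next
    case 4 then show ?thesis using A(6) B(6) at bt by simp
  qed
qed

lemma arcs_of_no_3_crossing: "no_3_crossing (arcs_of w)"
proof (rule no_3_crossing_of_run[where n = "length w" and St = "tab_seq w"])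
  show "\<And>i j. (i, j) \<in> arcs_of w \<Longrightarrow> 1 \<le> i \<and> i < j \<and> j \<le> length w"
    using arcs_of_memD[OF walk] by blast
qed (use arcs_of_vertex_disjoint undo_step_tab_seq[OF walk] tab_seq_invariants[OF walk]
       entries_tab_seq_eq_open_arcs[OF walk] in auto)

lemma arcs_of_short_arc:
  assumes i: "1 \<le> i" and arc: "(i, Suc i) \<in> arcs_of w"
  shows "w!(i - 1) = Add1 \<and> w!i = Rem1"
proof -
  note M = arcs_of_memD[OF walk arc]
  have il: "i < length w" using M(3) by simp
  define S where "S = tab_seq w i"
  note I = tab_seq_invariants[OF walk less_imp_le[OF il], folded S_def]
  have ev: "evicted (w!i) S = i" using M(6) unfolding evicted_at_def S_def by simp
  have iS: "i \<in> fst S" using entries_tab_seq_Suc(2)[OF walk il] M(4,6) unfolding S_def by simp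
  have "w!(i - 1) \<noteq> Add2"
  proof
    assume "w!(i - 1) = Add2"
    then have "i \<in> snd S" using i unfolding S_def by (cases i) auto
    then show False using iS standard_tableauD(3)[OF I(1)] by auto
  qed
  moreover have "w!i \<noteq> Rem2"
  proof
    assume Rem2: "w!i = Rem2"
    then have "allowed Rem2 (shape S)" using allowed_tab_seq[OF walk il] I(2) by simp
    then have ne: "snd S \<noteq> {}" unfolding shape_def by auto
    then have "Max (snd S) \<le> i" using Max_in[OF standard_tableauD(2)[OF I(1)] ne] I(3)
      unfolding entries_def by auto
    then show False using evicted_Rem2(2)[OF I(1) ne] ev Rem2 by simp
  qed
  ultimately show ?thesis using M(4,5) unfolding is_add_def is_rem_def by auto
qed

lemma short_arc_of_Add1_Rem1:
  assumes i: "Suc i < length w" and "w!i = Add1" and "w!Suc i = Rem1"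
  shows "(Suc i, Suc (Suc i)) \<in> arcs_of w"
proof -
  have fin: "finite (fst (tab_seq w i))"
    using standard_tableauD(1)[OF tab_seq_invariants(1)[OF walk]] i by simp
  have "\<forall>z\<in>fst (tab_seq w i). z \<le> Suc i"
    using tab_seq_invariants(3)[OF walk, of i] i unfolding entries_def by auto
  then have "evicted_at w (Suc (Suc i)) = Suc i"
    using assms fin unfolding evicted_at_def evicted_def by (simp add: Max_insert2)
  then show ?thesis unfolding arcs_of_def using assms by (force simp: is_rem_def)
qed

lemma isolated_vertices_arcs_of:
  "isolated_vertices (length w) (arcs_of w) = {v\<in>{1..length w}. w!(v - 1) = Stay}"
proof (intro set_eqI iffI)
  fix v assume "v \<in> isolated_vertices (length w) (arcs_of w)"
  then have v: "v \<in> {1..length w}" "\<not> (\<exists>a\<in>arcs_of w. in_arc v a)"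
    unfolding isolated_vertices_def by auto
  have "\<not> is_add (w!(v - 1))" using arcs_of_partner[OF walk, of v] v unfolding in_arc_def by force
  moreover have "\<not> is_rem (w!(v - 1))" using v unfolding arcs_of_def in_arc_def by force
  ultimately show "v \<in> {v\<in>{1..length w}. w!(v - 1) = Stay}" using v
    by (cases "w!(v - 1)") (auto simp: is_add_def is_rem_def)
next
  fix v assume v: "v \<in> {v\<in>{1..length w}. w!(v - 1) = Stay}"
  have "\<not> in_arc v a" if "a \<in> arcs_of w" for a
    using arcs_of_memD(4,5)[OF walk, of "fst a" "snd a"] that v unfolding in_arc_def
    by (auto simp: is_add_def is_rem_def)
  then show "v \<in> isolated_vertices (length w) (arcs_of w)" using v unfolding isolated_vertices_def by auto
qed

end

fun no_add1_rem1 :: "bool \<Rightarrow> step list \<Rightarrow> bool" where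
  "no_add1_rem1 after_add1 [] \<longleftrightarrow> True"
| "no_add1_rem1 after_add1 (x # w) \<longleftrightarrow> \<not> (after_add1 \<and> x = Rem1) \<and> no_add1_rem1 (x = Add1) w"

lemma no_add1_rem1_iff:
  "no_add1_rem1 after_add1 w \<longleftrightarrow> \<not> (after_add1 \<and> w \<noteq> [] \<and> hd w = Rem1) \<and>
     (\<forall>i. Suc i < length w \<longrightarrow> \<not> (w!i = Add1 \<and> w!Suc i = Rem1))"
proof (induction w arbitrary: after_add1)
  case (Cons x w)
  have "(\<forall>i. Suc i < length (x # w) \<longrightarrow> \<not> ((x # w)!i = Add1 \<and> (x # w)!Suc i = Rem1)) \<longleftrightarrow>
      \<not> (x = Add1 \<and> w \<noteq> [] \<and> hd w = Rem1) \<and> (\<forall>i. Suc i < length w \<longrightarrow> \<not> (w!i = Add1 \<and> w!Suc i = Rem1))"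
    (is "?L \<longleftrightarrow> ?R")
  proof
    assume L: ?L
    show ?R
    proof (intro conjI allI impI notI)
      assume "x = Add1 \<and> w \<noteq> [] \<and> hd w = Rem1"
      then show False using L[rule_format, of 0] by (auto simp: hd_conv_nth)
    next
      fix i assume "Suc i < length w" "w!i = Add1 \<and> w!Suc i = Rem1"
      then show False using L[rule_format, of "Suc i"] by simp
    qed
  next
    assume R: ?R
    show ?L
    proof (intro allI impI)
      fix i assume "Suc i < length (x # w)"
      then show "\<not> ((x # w)!i = Add1 \<and> (x # w)!Suc i = Rem1)"
        using R by (cases i) (auto simp: hd_conv_nth)
    qed
  qed
  then show ?case using Cons.IH[of "x = Add1"] by auto
qed simp

lemma finite_walks_length: "finite {w :: step list. length w = n \<and> P w}"
proof -
  have univ: "(UNIV :: step set) = {Stay, Add1, Add2, Rem1, Rem2}" by (auto intro: step.exhaust)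
  have "finite (UNIV :: step set)" unfolding univ by simp
  then have "finite {w :: step list. set w \<subseteq> UNIV \<and> length w = n}" by (rule finite_lists_length_eq)
  then show ?thesis by (rule rev_finite_subset) auto
qed

lemma card_walks_Suc:
  "card {w :: step list. length w = Suc n \<and> P w} =
     card {w. length w = n \<and> P (Stay # w)} + card {w. length w = n \<and> P (Add1 # w)}
   + card {w. length w = n \<and> P (Add2 # w)} + card {w. length w = n \<and> P (Rem1 # w)}
   + card {w. length w = n \<and> P (Rem2 # w)}"
proof -
  define W where "W x = (Cons x) ` {w. length w = n \<and> P (x # w)}" for x
  have card_W: "card (W x) = card {w. length w = n \<and> P (x # w)}" for x
    unfolding W_def by (rule card_image) (simp add: inj_on_def)
  have fin: "finite (W x)" for x unfolding W_def using finite_walks_length by simp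
  have split: "{w :: step list. length w = Suc n \<and> P w} = W Stay \<union> W Add1 \<union> W Add2 \<union> W Rem1 \<union> W Rem2"
  proof (intro set_eqI iffI)
    fix w assume "w \<in> {w :: step list. length w = Suc n \<and> P w}"
    then obtain x v where "w = x # v" "length v = n" "P (x # v)" by (cases w) auto
    then show "w \<in> W Stay \<union> W Add1 \<union> W Add2 \<union> W Rem1 \<union> W Rem2" unfolding W_def by (cases x) auto
  qed (auto simp: W_def)
  have disjoint: "x \<noteq> y \<Longrightarrow> W x \<inter> W y = {}" for x y unfolding W_def by auto
  show ?thesis unfolding split card_W[symmetric]
    by (subst card_Un_disjoint, use fin disjoint in auto)+
qed

lemma card_rna_walks:
  "card {w. length w = n \<and> walk_to_empty (a, b) w \<and> count_list w Stay = l \<and> no_add1_rem1 after_add1 w} =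
     rna_walks n after_add1 l a b"
proof (induction n arbitrary: a b l after_add1)
  case 0
  have "{w :: step list. length w = 0 \<and> walk_to_empty (a, b) w \<and> count_list w Stay = l \<and> no_add1_rem1 after_add1 w}
     = (if a = 0 \<and> b = 0 \<and> l = 0 then {[]} else {})" by auto
  then show ?case by simp
next
  case (Suc n)
  let ?W = "\<lambda>x. {w. length w = n \<and> walk_to_empty (a, b) (x # w) \<and> count_list (x # w) Stay = l
      \<and> no_add1_rem1 after_add1 (x # w)}"
  have "card (?W Stay) = (if 0 < l then rna_walks n False (l - 1) a b else 0)"
  proof (cases l)
    case (Suc k)
    then have "?W Stay = {w. length w = n \<and> walk_to_empty (a, b) w \<and> count_list w Stay = k \<and> no_add1_rem1 False w}"
      by auto
    then show ?thesis using Suc.IH Suc by simp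
  qed simp
  moreover have "card (?W Add1) = rna_walks n True l (Suc a) b" using Suc.IH by simp
  moreover have "card (?W Add2) = (if b < a then rna_walks n False l a (Suc b) else 0)"
    using Suc.IH by (cases "b < a") simp_all
  moreover have "card (?W Rem1) = (if b < a \<and> \<not> after_add1 then rna_walks n False l (a - 1) b else 0)"
    using Suc.IH by (cases "b < a \<and> \<not> after_add1") auto
  moreover have "card (?W Rem2) = (if 0 < b then rna_walks n False l a (b - 1) else 0)"
    using Suc.IH by (cases "0 < b") simp_all
  ultimately show ?case
    unfolding card_walks_Suc[of n "\<lambda>w. walk_to_empty (a, b) w \<and> count_list w Stay = l \<and> no_add1_rem1 after_add1 w"]
    by simp
qed

lemma card_stays: "card {v\<in>{1..length w}. w!(v - 1) = Stay} = count_list w Stay"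
proof -
  have "{v\<in>{1..length w}. w!(v - 1) = Stay} = Suc ` {i. i < length w \<and> w!i = Stay}"
  proof (intro set_eqI iffI)
    fix v assume "v \<in> {v\<in>{1..length w}. w!(v - 1) = Stay}"
    then show "v \<in> Suc ` {i. i < length w \<and> w!i = Stay}" by (intro image_eqI[of _ _ "v - 1"]) auto
  qed auto
  moreover have "count_list w Stay = length (filter (\<lambda>y. y = Stay) w)" by (induction w) auto
  ultimately show ?thesis by (simp add: card_image length_filter_conv_card)
qed

lemma rna3_arcs_of:
  assumes walk: "walk_to_empty (0, 0) w" and no11: "no_add1_rem1 False w"
  shows "rna3 (length w) (arcs_of w)"
proof -
  have "(i, Suc i) \<notin> arcs_of w" for i
  proof
    assume arc: "(i, Suc i) \<in> arcs_of w"
    then have i: "1 \<le> i" "Suc (i - 1) < length w" using arcs_of_memD[OF walk arc] by auto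
    moreover have "\<not> (w!(i - 1) = Add1 \<and> w!Suc (i - 1) = Rem1)"
      using no11 i(2) unfolding no_add1_rem1_iff by blast
    ultimately show False using arcs_of_short_arc[OF walk i(1) arc] by simp
  qed
  moreover have "digraph_on (length w) (arcs_of w)"
    unfolding digraph_on_def by (auto dest: arcs_of_memD(1-3)[OF walk])
  ultimately show ?thesis using arcs_of_vertex_disjoint[OF walk] arcs_of_no_3_crossing[OF walk]
    unfolding rna3_def three_noncrossing_iff by simp
qed

lemma walk_of_rna3:
  assumes "rna3 n A"
  shows "walk_to_empty (0, 0) (walk_of A n)" "length (walk_of A n) = n" "arcs_of (walk_of A n) = A"
    "no_add1_rem1 False (walk_of A n)"
proof -
  have A: "digraph_on n A" "vertex_disjoint A" "no_3_crossing A" "\<And>i. (i, Suc i) \<notin> A"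
    using assms unfolding rna3_def three_noncrossing_iff by auto
  interpret noncrossing_arcs A n
    using A(1-3) unfolding digraph_on_def by unfold_locales auto
  show walk: "walk_to_empty (0, 0) (walk_of A n)" "length (walk_of A n) = n" "arcs_of (walk_of A n) = A"
    by (rule walk_to_empty_walk_of length_walk_of arcs_of_walk_of)+
  show "no_add1_rem1 False (walk_of A n)" unfolding no_add1_rem1_iff
  proof (intro conjI allI impI notI)
    fix i assume "Suc i < length (walk_of A n)" "walk_of A n ! i = Add1 \<and> walk_of A n ! Suc i = Rem1"
    then show False using short_arc_of_Add1_Rem1[OF walk(1)] walk(3) A(4) by blast
  qed simp
qed

theorem S3_eq_card_walks:
  "S3 n l = card {w. length w = n \<and> walk_to_empty (0, 0) w \<and> count_list w Stay = l \<and> no_add1_rem1 False w}"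
  (is "_ = card ?W")
proof -
  have inj: "inj_on arcs_of ?W" by (rule inj_on_inverseI[of _ "\<lambda>A. walk_of A n"]) (auto simp: walk_of_arcs_of)
  have "{A. rna3 n A \<and> card (isolated_vertices n A) = l} = arcs_of ` ?W"
  proof (intro set_eqI iffI)
    fix A assume "A \<in> {A. rna3 n A \<and> card (isolated_vertices n A) = l}"
    then have A: "rna3 n A" "card (isolated_vertices n A) = l" by auto
    note W = walk_of_rna3[OF A(1)]
    have "count_list (walk_of A n) Stay = l"
      using isolated_vertices_arcs_of[OF W(1)] card_stays[of "walk_of A n"] W(2,3) A(2) by simp
    then show "A \<in> arcs_of ` ?W" using W by (intro image_eqI[of _ _ "walk_of A n"]) auto
  next
    fix A assume "A \<in> arcs_of ` ?W"
    then obtain w where w: "w \<in> ?W" "A = arcs_of w" by blast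
    then have walk: "walk_to_empty (0, 0) w" "length w = n" by auto
    have "card (isolated_vertices n A) = l"
      using isolated_vertices_arcs_of[OF walk(1)] card_stays[of w] w walk(2) by simp
    then show "A \<in> {A. rna3 n A \<and> card (isolated_vertices n A) = l}"
      using rna3_arcs_of[OF walk(1)] w walk(2) by simp
  qed
  then show ?thesis unfolding S3_def using card_image[OF inj] by simp
qed

theorem corollary3p3:
  fixes n l :: nat
  assumes "l \<le> n"
  shows "int (S3 n l) =
    (\<Sum>b = 0..(n - l) div 2. (-1) ^ b * int ((n - b) choose b) * int ((n - 2*b) choose l) *
       (catalan_half (n - l - 2*b) * catalan_half (n - l - 2*b + 4)
        - (catalan_half (n - l - 2*b + 2))^2))"
  using rna_walks_formula[of n l] unfolding S3_eq_card_walks card_rna_walks catalan_hankel_def .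

end
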